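(* Let $G$ be a compact Lie group, $H$ a closed subgroup, $V$ a finite-dimensional orthogonal representation of $H$, and $\sigma\in\mathcal R_G([H])$. Then $\mathrm{sym}_{H,\sigma}(V)$ is a submanifold of $\mathrm{sym}_H(V)$ of codimension $d(\sigma)$. Moreover, if $s\in\mathrm{sym}_{H,\sigma}(V)$, $L\subseteq\mathrm{sym}_H(V)$ is a linear subspace, and $\Pi:V\to\ker s$ is the orthogonal projection, then $s+L$ is transverse to $\mathrm{sym}_{H,\sigma}(V)$ if and only if the map $\varphi:L\to\mathrm{sym}_H(\ker s)$, $\varphi(l)(x)=\Pi(l(x))$, is surjective.
   Context: $\mathcal R_G$ is the set of isomorphism classes of $(K,W,\rho)$ with $K$ a closed subgroup of $G$ and $\rho$ a finite-dimensional real representation of $K$, where $(K,W,\rho)\cong(K',W',\rho')$ iff $K'=gKg^{-1}$ and $\rho'(gkg^{-1})=\varphi\rho(k)\varphi^{-1}$ for some $g\in G$ and linear iso $\varphi$; $\mathcal R_G([H])$ is the set of classes represented by representations of $H$. For an orthogonal $H$-representation $W$, $\mathrm{sym}_H(W)$ is the space of $H$-equivariant symmetric linear maps $W\to W$. $\mathrm{sym}_{H,\sigma}(V)$ is the set of $s\in\mathrm{sym}_H(V)$ with $\ker s$ (as an $H$-representation) representing $\sigma$. For $\sigma$ represented by $(K,W)$, $d(\sigma)=\dim_{\mathbb R}\mathrm{sym}_K(W)$ (independent of choices). *)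

theory Defs
  imports "HOL-Analysis.Analysis"
begin

definition matrix_group :: "(real^'n^'n) set \<Rightarrow> bool" where
  "matrix_group G \<longleftrightarrow> mat 1 \<in> G \<and>
     (\<forall>a\<in>G. invertible a \<and> matrix_inv a \<in> G) \<and> (\<forall>a\<in>G. \<forall>b\<in>G. a ** b \<in> G)"

(* a compact Lie group, realised as a compact subgroup of GL_n(R) *)
definition compact_lie_group :: "(real^'n^'n) set \<Rightarrow> bool" where
  "compact_lie_group G \<longleftrightarrow> matrix_group G \<and> compact G"

definition closed_subgroup :: "(real^'n^'n) set \<Rightarrow> (real^'n^'n) set \<Rightarrow> bool" where
  "closed_subgroup H G \<longleftrightarrow> H \<subseteq> G \<and> matrix_group H \<and> closed H"

definition is_rep :: "(real^'n^'n) set \<Rightarrow> 'w::euclidean_space set \<Rightarrow> (real^'n^'n \<Rightarrow> 'w \<Rightarrow> 'w) \<Rightarrow> bool" where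
  "is_rep K W \<rho> \<longleftrightarrow> subspace W \<and>
     (\<forall>k\<in>K. \<forall>x\<in>W. \<rho> k x \<in> W) \<and>
     (\<forall>k\<in>K. \<forall>x\<in>W. \<forall>y\<in>W. \<rho> k (x + y) = \<rho> k x + \<rho> k y) \<and>
     (\<forall>k\<in>K. \<forall>c. \<forall>x\<in>W. \<rho> k (c *\<^sub>R x) = c *\<^sub>R \<rho> k x) \<and>
     (\<forall>x\<in>W. \<rho> (mat 1) x = x) \<and>
     (\<forall>k1\<in>K. \<forall>k2\<in>K. \<forall>x\<in>W. \<rho> (k1 ** k2) x = \<rho> k1 (\<rho> k2 x)) \<and>
     (\<forall>x\<in>W. continuous_on K (\<lambda>k. \<rho> k x))"

definition orth_rep :: "(real^'n^'n) set \<Rightarrow> (real^'n^'n \<Rightarrow> ('v::euclidean_space \<Rightarrow>\<^sub>L 'v)) \<Rightarrow> bool" where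
  "orth_rep H \<rho> \<longleftrightarrow> is_rep H UNIV (\<lambda>h. blinfun_apply (\<rho> h)) \<and> continuous_on H \<rho> \<and>
     (\<forall>h\<in>H. \<forall>x. norm (blinfun_apply (\<rho> h) x) = norm x)"

definition symH :: "(real^'n^'n) set \<Rightarrow> (real^'n^'n \<Rightarrow> ('v::euclidean_space \<Rightarrow>\<^sub>L 'v)) \<Rightarrow> ('v \<Rightarrow>\<^sub>L 'v) set" where
  "symH H \<rho> = {s. (\<forall>x y. inner (blinfun_apply s x) y = inner x (blinfun_apply s y)) \<and>
     (\<forall>h\<in>H. \<forall>x. blinfun_apply s (blinfun_apply (\<rho> h) x) = blinfun_apply (\<rho> h) (blinfun_apply s x))}"

definition kernel :: "('v::real_normed_vector \<Rightarrow>\<^sub>L 'v) \<Rightarrow> 'v set" where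
  "kernel s = {x. blinfun_apply s x = 0}"

(* sym_H(U) for an H-invariant subspace U of V, maps given by their values on U *)
definition symH_sub :: "(real^'n^'n) set \<Rightarrow> (real^'n^'n \<Rightarrow> ('v::euclidean_space \<Rightarrow>\<^sub>L 'v)) \<Rightarrow> 'v set \<Rightarrow> ('v \<Rightarrow> 'v) set" where
  "symH_sub H \<rho> U = {f. (\<forall>x\<in>U. f x \<in> U) \<and>
     (\<forall>x\<in>U. \<forall>y\<in>U. f (x + y) = f x + f y) \<and> (\<forall>c. \<forall>x\<in>U. f (c *\<^sub>R x) = c *\<^sub>R f x) \<and>
     (\<forall>x\<in>U. \<forall>y\<in>U. inner (f x) y = inner x (f y)) \<and>
     (\<forall>h\<in>H. \<forall>x\<in>U. f (blinfun_apply (\<rho> h) x) = blinfun_apply (\<rho> h) (f x))}"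

definition orth_proj :: "'v::euclidean_space set \<Rightarrow> 'v \<Rightarrow> 'v" where
  "orth_proj U x = (THE p. p \<in> U \<and> (\<forall>u\<in>U. inner (x - p) u = 0))"

(* (H, U, rho|U) is isomorphic to (H, W, rhoW) in R_G *)
definition rep_iso_G :: "(real^'n^'n) set \<Rightarrow> (real^'n^'n) set \<Rightarrow>
    (real^'n^'n \<Rightarrow> 'v \<Rightarrow> 'v) \<Rightarrow> 'v::euclidean_space set \<Rightarrow>
    (real^'n^'n \<Rightarrow> 'w \<Rightarrow> 'w) \<Rightarrow> 'w::euclidean_space set \<Rightarrow> bool" where
  "rep_iso_G G H \<rho> U \<rho>W W \<longleftrightarrow>
     (\<exists>g\<in>G. H = (\<lambda>k. g ** k ** matrix_inv g) ` H \<and>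
       (\<exists>\<phi>. linear \<phi> \<and> bij_betw \<phi> U W \<and>
          (\<forall>k\<in>H. \<forall>x\<in>U. \<rho>W (g ** k ** matrix_inv g) (\<phi> x) = \<phi> (\<rho> k x))))"

(* sym_{H,sigma}(V), sigma represented by (H, W, rhoW) *)
definition symH_sigma :: "(real^'n^'n) set \<Rightarrow> (real^'n^'n) set \<Rightarrow>
    (real^'n^'n \<Rightarrow> ('v::euclidean_space \<Rightarrow>\<^sub>L 'v)) \<Rightarrow>
    (real^'n^'n \<Rightarrow> 'w \<Rightarrow> 'w) \<Rightarrow> 'w::euclidean_space set \<Rightarrow> ('v \<Rightarrow>\<^sub>L 'v) set" where
  "symH_sigma G H \<rho> \<rho>W W =
     {s \<in> symH H \<rho>. rep_iso_G G H (\<lambda>h. blinfun_apply (\<rho> h)) (kernel s) \<rho>W W}"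

definition inv_inner :: "(real^'n^'n) set \<Rightarrow> (real^'n^'n \<Rightarrow> 'w \<Rightarrow> 'w) \<Rightarrow> 'w::euclidean_space set \<Rightarrow>
    ('w \<Rightarrow> 'w \<Rightarrow> real) \<Rightarrow> bool" where
  "inv_inner K \<rho> W b \<longleftrightarrow>
     (\<forall>x\<in>W. \<forall>y\<in>W. b x y = b y x) \<and>
     (\<forall>x\<in>W. \<forall>y\<in>W. \<forall>z\<in>W. b (x + y) z = b x z + b y z) \<and>
     (\<forall>c. \<forall>x\<in>W. \<forall>y\<in>W. b (c *\<^sub>R x) y = c * b x y) \<and>
     (\<forall>x\<in>W. x \<noteq> 0 \<longrightarrow> b x x > 0) \<and>
     (\<forall>k\<in>K. \<forall>x\<in>W. \<forall>y\<in>W. b (\<rho> k x) (\<rho> k y) = b x y)"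

(* sym_K(W) w.r.t. the invariant inner product b; a map W -> W is encoded as
   the linear map on the ambient space that vanishes on the orthogonal complement of W *)
definition sym_rep :: "(real^'n^'n) set \<Rightarrow> (real^'n^'n \<Rightarrow> 'w \<Rightarrow> 'w) \<Rightarrow> 'w::euclidean_space set \<Rightarrow>
    ('w \<Rightarrow> 'w \<Rightarrow> real) \<Rightarrow> ('w \<Rightarrow>\<^sub>L 'w) set" where
  "sym_rep K \<rho> W b = {f. (\<forall>x\<in>W. blinfun_apply f x \<in> W) \<and>
      (\<forall>x. (\<forall>w\<in>W. inner x w = 0) \<longrightarrow> blinfun_apply f x = 0) \<and>
      (\<forall>x\<in>W. \<forall>y\<in>W. b (blinfun_apply f x) y = b x (blinfun_apply f y)) \<and>
      (\<forall>k\<in>K. \<forall>x\<in>W. blinfun_apply f (\<rho> k x) = \<rho> k (blinfun_apply f x))}"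

definition d_sigma :: "(real^'n^'n) set \<Rightarrow> (real^'n^'n \<Rightarrow> 'w \<Rightarrow> 'w) \<Rightarrow> 'w::euclidean_space set \<Rightarrow> nat" where
  "d_sigma K \<rho> W = dim (sym_rep K \<rho> W (SOME b. inv_inner K \<rho> W b))"

(* C^infinity: all iterated directional derivatives exist (Frechet) on the open set U *)
definition C_infinity_on :: "'a::real_normed_vector set \<Rightarrow> ('a \<Rightarrow> 'b::real_normed_vector) \<Rightarrow> bool" where
  "C_infinity_on U f \<longleftrightarrow> (\<exists>S. f \<in> S \<and>
     (\<forall>g\<in>S. g differentiable_on U \<and> (\<forall>v. (\<lambda>x. frechet_derivative g (at x) v) \<in> S)))"

(* M is a smooth embedded submanifold of codimension k of the finite-dim. linear subspace E:
   locally the zero set in E of a smooth submersion E \<supseteq> E\<inter>U \<rightarrow> Y with dim Y = k *)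
definition submanifold_codim :: "'a::real_normed_vector set \<Rightarrow> 'a set \<Rightarrow> nat \<Rightarrow> bool" where
  "submanifold_codim E M k \<longleftrightarrow> subspace E \<and> M \<subseteq> E \<and>
     (\<forall>p\<in>M. \<exists>U (F::'a \<Rightarrow> 'a) Y. open U \<and> p \<in> U \<and> subspace Y \<and> dim Y = k \<and> C_infinity_on U F \<and>
        (\<forall>q\<in>E \<inter> U. F q \<in> Y \<and> frechet_derivative F (at q) ` E = Y) \<and>
        M \<inter> U = {q \<in> E \<inter> U. F q = 0})"

definition tangent_space :: "'a::real_normed_vector set \<Rightarrow> 'a \<Rightarrow> 'a set" where
  "tangent_space M p = {v. \<exists>\<gamma> e. e > 0 \<and> \<gamma> 0 = p \<and> (\<forall>t\<in>{-e<..<e}. \<gamma> t \<in> M) \<and>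
       (\<gamma> has_vector_derivative v) (at 0)}"

(* the affine subspace p + L is transverse to M (inside E) at the point p \<in> M *)
definition transverse_at :: "'a::real_normed_vector set \<Rightarrow> 'a set \<Rightarrow> 'a set \<Rightarrow> 'a \<Rightarrow> bool" where
  "transverse_at E L M p \<longleftrightarrow> p \<in> M \<and> {a + b | a b. a \<in> tangent_space M p \<and> b \<in> L} = E"

end

(* Fix s in sym_{H,sigma}(V) with kernel K, let P be the orthogonal projection onto K and
   Q = 1 - P.  For t near s the block Q t Q is invertible on the orthogonal complement of K, and the
   Schur complement  F t = P t P - P t Q (Q t Q)^-1 Q t P  is a smooth map into the space Y of
   symmetric H-equivariant maps supported on K.  P maps ker t equivariantly and bijectively onto the
   kernel of F t on K, so near s the stratum sym_{H,sigma}(V) is exactly the zero set of F.  Since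
   F (t - y) = F t - y for y in Y, the derivative of F is the identity on Y, hence F is a submersion
   and the stratum has codimension dim Y = dim sym_H(K) = d(sigma).  For the last equality an
   invariant inner product on W is pulled back to K along the isomorphism given by sigma and
   compared with the ambient one through its equivariant Gram operator.  The tangent space at s is
   {v. P v P = 0}, so s + L is transverse exactly when the compressions P l P, l in L, exhaust
   sym_H(K). *)

theory Submission
  imports Defs
begin

lemma orth_proj_ex1:
  fixes U :: "'v::euclidean_space set"
  assumes "subspace U"
  shows "\<exists>!p. p \<in> U \<and> (\<forall>u\<in>U. inner (x - p) u = 0)"
proof -
  obtain y z where y: "y \<in> span U" and z: "\<And>w. w \<in> span U \<Longrightarrow> orthogonal z w" and x: "x = y + z"
    using orthogonal_subspace_decomp_exists[of U x] by blast
  have span_U: "span U = U" using assms by (simp add: span_eq_iff)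
  have y_ok: "y \<in> U \<and> (\<forall>u\<in>U. inner (x - y) u = 0)"
    using y z x span_U by (simp add: orthogonal_def)
  show ?thesis
  proof (rule ex1I[of _ y])
    fix p assume p: "p \<in> U \<and> (\<forall>u\<in>U. inner (x - p) u = 0)"
    have "y - p \<in> U" using p y_ok assms by (simp add: subspace_diff)
    then have "inner (x - p) (y - p) - inner (x - y) (y - p) = 0" using p y_ok by simp
    then have "inner (y - p) (y - p) = 0" by (simp add: inner_diff_left inner_diff_right)
    then show "p = y" by simp
  qed (fact y_ok)
qed

lemma
  fixes U :: "'v::euclidean_space set"
  assumes "subspace U"
  shows orth_proj_in: "orth_proj U x \<in> U"
    and orth_proj_orthogonal: "u \<in> U \<Longrightarrow> inner (x - orth_proj U x) u = 0"
  using theI'[OF orth_proj_ex1[OF assms, of x]] by (auto simp: orth_proj_def)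

lemma orth_proj_unique:
  fixes U :: "'v::euclidean_space set"
  assumes "subspace U" "p \<in> U" "\<And>u. u \<in> U \<Longrightarrow> inner (x - p) u = 0"
  shows "orth_proj U x = p"
  using orth_proj_ex1[OF assms(1), of x] orth_proj_in[OF assms(1)] orth_proj_orthogonal[OF assms(1)] assms(2,3)
  by blast

lemma orth_proj_self: "subspace U \<Longrightarrow> u \<in> U \<Longrightarrow> orth_proj U u = (u::'v::euclidean_space)"
  by (rule orth_proj_unique) auto

lemma orth_proj_eq_0:
  "subspace U \<Longrightarrow> (\<And>u. u \<in> U \<Longrightarrow> inner x u = 0) \<Longrightarrow> orth_proj U x = (0::'v::euclidean_space)"
  by (rule orth_proj_unique) (auto simp: subspace_0)

lemma orth_proj_inner:
  fixes U :: "'v::euclidean_space set"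
  assumes "subspace U" "u \<in> U"
  shows "inner (orth_proj U x) u = inner x u"
  using orth_proj_orthogonal[OF assms, of x] by (simp add: inner_diff_left)

lemma linear_orth_proj:
  fixes U :: "'v::euclidean_space set"
  assumes U: "subspace U"
  shows "linear (orth_proj U)"
proof (rule linearI)
  fix x y
  show "orth_proj U (x + y) = orth_proj U x + orth_proj U y"
    by (rule orth_proj_unique[OF U])
      (simp_all add: U orth_proj_in subspace_add inner_diff_left inner_add_left orth_proj_inner)
  fix c :: real
  show "orth_proj U (c *\<^sub>R x) = c *\<^sub>R orth_proj U x"
    by (rule orth_proj_unique[OF U])
      (simp_all add: U orth_proj_in subspace_scale inner_diff_left orth_proj_inner)
qed

lemma orth_proj_symmetric:
  fixes U :: "'v::euclidean_space set"
  assumes U: "subspace U"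
  shows "inner (orth_proj U x) y = inner x (orth_proj U y)"
  using orth_proj_inner[OF U orth_proj_in[OF U, of x], of y] orth_proj_inner[OF U orth_proj_in[OF U, of y], of x]
  by (simp add: inner_commute)

text \<open>The library proves the following only for Euclidean spaces; it is needed for spaces of
  operators.\<close>

lemma dim_linear_image_inj:
  fixes f :: "'a::real_vector \<Rightarrow> 'b::real_vector"
  assumes f: "linear f" "inj_on f (span S)"
  shows "dim (f ` S) = dim S"
proof -
  obtain B where B: "B \<subseteq> S" "independent B" "S \<subseteq> span B" "card B = dim S"
    using basis_exists[of S] by blast
  have span_B: "span B = span S" using B(1,3) by (metis span_mono span_span subset_antisym)
  have inj_B: "inj_on f (span B)" using f(2) span_B by simp
  then have "independent (f ` B)" using linear_dependent_inj_imageD[OF f(1)] B(2) by blast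
  moreover have "span (f ` B) = span (f ` S)" by (simp add: span_linear_image[OF f(1)] span_B)
  ultimately have "dim (f ` S) = card (f ` B)" by (simp add: dim_eq_card)
  also have "\<dots> = card B" using inj_on_subset[OF inj_B span_superset] by (rule card_image)
  finally show ?thesis using B(4) by simp
qed

lemma dim_eq_linear_inverses:
  fixes f :: "'a::real_vector \<Rightarrow> 'b::real_vector"
  assumes f: "linear f" and g: "linear g"
    and S: "\<And>x. x \<in> S \<Longrightarrow> f x \<in> T \<and> g (f x) = x" and T: "\<And>y. y \<in> T \<Longrightarrow> g y \<in> S \<and> f (g y) = y"
  shows "dim S = dim T"
proof -
  have "g (f x) = x" if "x \<in> span S" for x
    using linear_eq_on_span[OF linear_compose[OF f g] linear_id _ that] S by (simp add: o_def)
  then have "inj_on f (span S)" by (metis inj_onI)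
  moreover have "f ` S = T" using S T by (metis image_eqI image_subset_iff subset_antisym subsetI)
  ultimately show ?thesis using dim_linear_image_inj[OF f] by metis
qed

lemma bij_betw_linear_dim_eq:
  assumes "linear f" "bij_betw f S T" "subspace S"
  shows "dim T = dim S"
proof -
  have "inj_on f (span S)"
    unfolding span_eq_iff[THEN iffD2, OF assms(3)] using assms(2) by (simp add: bij_betw_def)
  then show ?thesis using dim_linear_image_inj[OF assms(1), of S] assms(2) by (simp add: bij_betw_def)
qed

lemma subspace_eq_if_inner_eq:
  fixes u u' :: "'a::real_inner"
  assumes "subspace U" "u \<in> U" "u' \<in> U" "\<And>y. y \<in> U \<Longrightarrow> inner u y = inner u' y"
  shows "u = u'"
proof -
  have "inner (u - u') (u - u') = 0"
    using assms(4)[of "u - u'"] assms(1-3) by (simp add: subspace_diff inner_diff_left)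
  then show ?thesis by simp
qed

lemma linear_inner_representation:
  fixes B :: "'a::euclidean_space \<Rightarrow> 'a \<Rightarrow> real"
  assumes "\<And>y. linear (\<lambda>x. B x y)" "\<And>x. linear (B x)"
  obtains T where "linear T" "\<And>x y. B x y = inner (T x) y"
proof
  show "linear (\<lambda>x. \<Sum>i\<in>Basis. B x i *\<^sub>R i)"
    by (intro linear_compose_sum ballI linearI)
      (simp_all add: linear_add[OF assms(1)] linear_scale[OF assms(1)] scaleR_add_left)
  fix x y
  interpret linear "B x" by (fact assms(2))
  have "B x y = B x (\<Sum>i\<in>Basis. inner y i *\<^sub>R i)" by (simp add: euclidean_representation)
  also have "\<dots> = inner (\<Sum>i\<in>Basis. B x i *\<^sub>R i) y"
    by (simp add: sum scale inner_sum_left inner_sum_right inner_commute mult.commute)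
  finally show "B x y = inner (\<Sum>i\<in>Basis. B x i *\<^sub>R i) y" .
qed

lemma linear_inj_on_endomorphism_surj:
  fixes T :: "'a::euclidean_space \<Rightarrow> 'a"
  assumes "linear T" "subspace U" "T ` U \<subseteq> U" "inj_on T U"
  shows "T ` U = U"
proof (rule subspace_dim_equal[OF linear_subspace_image[OF assms(1,2)] assms(2,3)])
  have "inj_on T (span U)" unfolding span_eq_iff[THEN iffD2, OF assms(2)] by (fact assms(4))
  then show "dim U \<le> dim (T ` U)" using dim_image_eq[OF assms(1), of U] by simp
qed

section \<open>Inverting operators on a Euclidean space\<close>

lemma blinfun_apply_Blinfun_linear:
  fixes f :: "'a::euclidean_space \<Rightarrow> 'b::real_normed_vector"
  shows "linear f \<Longrightarrow> blinfun_apply (Blinfun f) = f"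
  by (simp add: bounded_linear_Blinfun_apply linear_conv_bounded_linear)

lemma norm_blinfun_compose3:
  fixes a b c :: "'a::real_normed_vector \<Rightarrow>\<^sub>L 'a"
  shows "norm (a o\<^sub>L b o\<^sub>L c) \<le> norm a * norm b * norm c"
  by (meson mult_right_mono norm_blinfun_compose norm_ge_zero order_trans)

lemma bounded_linear_blinfun_sandwich: "bounded_linear (\<lambda>H. A o\<^sub>L H o\<^sub>L B)"
  by (rule bounded_linear_compose[OF bounded_bilinear.bounded_linear_left bounded_bilinear.bounded_linear_right])
    (rule bounded_bilinear_blinfun_compose)+

definition blinfun_inv :: "('a::euclidean_space \<Rightarrow>\<^sub>L 'a) \<Rightarrow> 'a \<Rightarrow>\<^sub>L 'a" where
  "blinfun_inv T = Blinfun (inv (blinfun_apply T))"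

lemma
  fixes T :: "'a::euclidean_space \<Rightarrow>\<^sub>L 'a"
  assumes "inj (blinfun_apply T)"
  shows blinfun_inv_left: "blinfun_inv T (T x) = x"
    and blinfun_inv_right: "T (blinfun_inv T x) = x"
proof -
  have "bounded_linear (inv (blinfun_apply T))"
    using assms by (simp add: inj_linear_imp_inv_bounded_linear blinfun.bounded_linear_right)
  moreover have "surj (blinfun_apply T)"
    using assms by (simp add: linear_injective_imp_surjective blinfun.bounded_linear_right bounded_linear.linear)
  ultimately show "blinfun_inv T (T x) = x" "T (blinfun_inv T x) = x"
    using assms by (simp_all add: blinfun_inv_def bounded_linear_Blinfun_apply surj_f_inv_f)
qed

lemma blinfun_inv_diff:
  fixes S T :: "'a::euclidean_space \<Rightarrow>\<^sub>L 'a"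
  assumes "inj (blinfun_apply S)" "inj (blinfun_apply T)"
  shows "blinfun_inv S - blinfun_inv T = - (blinfun_inv S o\<^sub>L (S - T) o\<^sub>L blinfun_inv T)"
  by (rule blinfun_eqI)
    (simp add: assms blinfun_inv_left blinfun_inv_right blinfun.diff_left blinfun.diff_right blinfun.minus_left)

lemma inj_blinfun_perturbation:
  fixes S T :: "'a::euclidean_space \<Rightarrow>\<^sub>L 'a"
  assumes T: "inj (blinfun_apply T)" and small: "norm (blinfun_inv T) * norm (S - T) \<le> 1 / 2"
  shows "inj (blinfun_apply S)"
proof -
  have "x = 0" if "S x = 0" for x
  proof -
    have "x = - blinfun_inv T ((S - T) x)"
      using that by (simp add: blinfun.diff_left blinfun.minus_right blinfun_inv_left[OF T])
    also have "norm \<dots> \<le> norm (blinfun_inv T) * norm ((S - T) x)" by (simp add: norm_blinfun)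
    also have "\<dots> \<le> norm (blinfun_inv T) * (norm (S - T) * norm x)"
      by (simp add: norm_blinfun mult_left_mono)
    finally have "norm x \<le> (norm (blinfun_inv T) * norm (S - T)) * norm x" by (simp add: mult.assoc)
    then have "norm x \<le> norm x / 2"
      using mult_right_mono[OF small norm_ge_zero[of x]] by linarith
    then show "x = 0" by simp
  qed
  then show ?thesis by (intro injI) (metis blinfun.diff_right right_minus_eq)
qed

lemma norm_blinfun_inv_perturbation:
  fixes S T :: "'a::euclidean_space \<Rightarrow>\<^sub>L 'a"
  assumes T: "inj (blinfun_apply T)" and small: "norm (blinfun_inv T) * norm (S - T) \<le> 1 / 2"
  shows "norm (blinfun_inv S - blinfun_inv T) \<le> 2 * norm (blinfun_inv T) ^ 2 * norm (S - T)"
proof -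
  note S = inj_blinfun_perturbation[OF T small]
  define r where "r = norm (blinfun_inv T)"
  define n where "n = norm (S - T)"
  define a where "a = norm (blinfun_inv S - blinfun_inv T)"
  have r0: "0 \<le> r" and a0: "0 \<le> a" and n0: "0 \<le> n" by (simp_all add: r_def a_def n_def)
  have "norm (blinfun_inv S) \<le> r + a"
    using norm_triangle_ineq[of "blinfun_inv T" "blinfun_inv S - blinfun_inv T"] by (simp add: r_def a_def)
  have "a = norm (blinfun_inv S o\<^sub>L (S - T) o\<^sub>L blinfun_inv T)"
    by (simp add: a_def blinfun_inv_diff[OF S T])
  also have "\<dots> \<le> norm (blinfun_inv S) * n * r"
    unfolding n_def r_def by (rule norm_blinfun_compose3)
  also have "\<dots> \<le> (r + a) * (n * r)"
    using mult_right_mono[OF \<open>norm (blinfun_inv S) \<le> r + a\<close>, of "n * r"] n0 r0 by (simp add: mult.assoc)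
  finally have a: "a \<le> (r + a) * (n * r)" .
  have nr: "n * r \<le> 1 / 2" using small by (simp add: n_def r_def mult.commute)
  have "(r + a) * (n * r) \<le> (r + a) / 2" using mult_left_mono[OF nr, of "r + a"] r0 a0 by simp
  with a have "a \<le> (r + a) / 2" by (rule order_trans)
  then have "a \<le> r" by simp
  then have "a \<le> 2 * r * (n * r)"
    using a mult_right_mono[of "r + a" "2 * r" "n * r"] n0 r0 by simp
  then show ?thesis by (simp add: a_def r_def n_def power2_eq_square mult_ac)
qed

lemma norm_blinfun_inv_remainder:
  fixes S T :: "'a::euclidean_space \<Rightarrow>\<^sub>L 'a"
  assumes T: "inj (blinfun_apply T)" and small: "norm (blinfun_inv T) * norm (S - T) \<le> 1 / 2"
  shows "norm (blinfun_inv S - blinfun_inv T - - (blinfun_inv T o\<^sub>L (S - T) o\<^sub>L blinfun_inv T))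
    \<le> 2 * norm (blinfun_inv T) ^ 3 * norm (S - T) ^ 2"
proof -
  have "blinfun_inv S - blinfun_inv T - - (blinfun_inv T o\<^sub>L (S - T) o\<^sub>L blinfun_inv T)
      = (blinfun_inv T - blinfun_inv S) o\<^sub>L (S - T) o\<^sub>L blinfun_inv T"
    by (rule blinfun_eqI)
      (simp add: blinfun_inv_diff[OF inj_blinfun_perturbation[OF T small] T] blinfun.diff_left
        blinfun.minus_left blinfun.diff_right blinfun.minus_right)
  also have "norm \<dots> \<le> norm (blinfun_inv T - blinfun_inv S) * norm (S - T) * norm (blinfun_inv T)"
    by (rule norm_blinfun_compose3)
  also have "\<dots> \<le> (2 * norm (blinfun_inv T) ^ 2 * norm (S - T)) * norm (S - T) * norm (blinfun_inv T)"
    using norm_blinfun_inv_perturbation[OF T small]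
    by (intro mult_right_mono) (simp_all add: norm_minus_commute)
  finally show ?thesis by (simp add: power2_eq_square power3_eq_cube mult_ac)
qed

lemma open_inj_blinfun: "open {T :: 'a::euclidean_space \<Rightarrow>\<^sub>L 'a. inj (blinfun_apply T)}"
  unfolding open_dist
proof (intro ballI)
  fix T :: "'a \<Rightarrow>\<^sub>L 'a" assume "T \<in> {T. inj (blinfun_apply T)}"
  then have T: "inj (blinfun_apply T)" by simp
  define r where "r = norm (blinfun_inv T)"
  have r: "0 \<le> r" by (simp add: r_def)
  show "\<exists>e>0. \<forall>S. dist S T < e \<longrightarrow> S \<in> {T. inj (blinfun_apply T)}"
  proof (intro exI[of _ "1 / (2 * (r + 1))"] conjI allI impI)
    show "0 < 1 / (2 * (r + 1))" using r by simp
    fix S assume "dist S T < 1 / (2 * (r + 1))"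
    then have "r * norm (S - T) \<le> (r + 1) * (1 / (2 * (r + 1)))"
      using r by (intro mult_mono) (simp_all add: dist_norm)
    also have "\<dots> = 1 / 2" using r by simp
    finally show "S \<in> {T. inj (blinfun_apply T)}"
      using inj_blinfun_perturbation[OF T] by (simp add: r_def)
  qed
qed

lemma has_derivative_blinfun_inv:
  fixes T :: "'a::euclidean_space \<Rightarrow>\<^sub>L 'a"
  assumes T: "inj (blinfun_apply T)"
  shows "(blinfun_inv has_derivative (\<lambda>H. - (blinfun_inv T o\<^sub>L H o\<^sub>L blinfun_inv T))) (at T)"
  unfolding has_derivative_at_alt
proof (intro conjI allI impI)
  show "bounded_linear (\<lambda>H. - (blinfun_inv T o\<^sub>L H o\<^sub>L blinfun_inv T))"
    by (rule bounded_linear_minus[OF bounded_linear_blinfun_sandwich])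
  define r where "r = norm (blinfun_inv T)"
  have r: "0 \<le> r" "0 < 2 * r ^ 3 + 1" by (simp_all add: r_def add_nonneg_pos)
  fix e :: real assume e: "0 < e"
  show "\<exists>d>0. \<forall>S. norm (S - T) < d \<longrightarrow>
    norm (blinfun_inv S - blinfun_inv T - - (blinfun_inv T o\<^sub>L (S - T) o\<^sub>L blinfun_inv T)) \<le> e * norm (S - T)"
  proof (intro exI[of _ "min (1 / (2 * (r + 1))) (e / (2 * r ^ 3 + 1))"] conjI allI impI)
    show "0 < min (1 / (2 * (r + 1))) (e / (2 * r ^ 3 + 1))" using r e by simp
    fix S assume S: "norm (S - T) < min (1 / (2 * (r + 1))) (e / (2 * r ^ 3 + 1))"
    define n where "n = norm (S - T)"
    have n: "0 \<le> n" by (simp add: n_def)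
    have "r * n \<le> (r + 1) * (1 / (2 * (r + 1)))" using r S by (intro mult_mono) (simp_all add: n_def)
    also have "\<dots> = 1 / 2" using r by simp
    finally have small: "norm (blinfun_inv T) * norm (S - T) \<le> 1 / 2" by (simp add: r_def n_def)
    have "(2 * r ^ 3 + 1) * n \<le> e" using S r by (simp add: n_def pos_less_divide_eq mult.commute less_imp_le)
    then have "2 * r ^ 3 * n \<le> e" using n by (simp add: algebra_simps)
    then have "(2 * r ^ 3 * n) * n \<le> e * n" using n by (rule mult_right_mono)
    with norm_blinfun_inv_remainder[OF T small]
    show "norm (blinfun_inv S - blinfun_inv T - - (blinfun_inv T o\<^sub>L (S - T) o\<^sub>L blinfun_inv T))
        \<le> e * norm (S - T)" by (simp add: r_def n_def power2_eq_square mult_ac)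
  qed
qed

section \<open>Rational expressions in operators are smooth\<close>

text \<open>The rule \<open>cong\<close> is what lets the class absorb \<open>frechet_derivative\<close>, which is
  determined only on the open set U.\<close>

inductive blinfun_rational_on :: "'x::real_normed_vector set \<Rightarrow> ('x \<Rightarrow> ('a::euclidean_space \<Rightarrow>\<^sub>L 'a)) \<Rightarrow> bool"
  for U where
  const: "blinfun_rational_on U (\<lambda>x. c)"
| linear: "bounded_linear f \<Longrightarrow> blinfun_rational_on U f"
| add: "blinfun_rational_on U f \<Longrightarrow> blinfun_rational_on U g \<Longrightarrow> blinfun_rational_on U (\<lambda>x. f x + g x)"
| diff: "blinfun_rational_on U f \<Longrightarrow> blinfun_rational_on U g \<Longrightarrow> blinfun_rational_on U (\<lambda>x. f x - g x)"
| compose: "blinfun_rational_on U f \<Longrightarrow> blinfun_rational_on U g \<Longrightarrow> blinfun_rational_on U (\<lambda>x. f x o\<^sub>L g x)"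
| inverse: "blinfun_rational_on U f \<Longrightarrow> (\<And>x. x \<in> U \<Longrightarrow> inj (blinfun_apply (f x))) \<Longrightarrow>
    blinfun_rational_on U (\<lambda>x. blinfun_inv (f x))"
| cong: "blinfun_rational_on U f \<Longrightarrow> (\<And>x. x \<in> U \<Longrightarrow> g x = f x) \<Longrightarrow> blinfun_rational_on U g"

lemma blinfun_rational_on_has_derivative:
  assumes U: "open U" and "blinfun_rational_on U f"
  shows "\<exists>D. (\<forall>x\<in>U. (f has_derivative D x) (at x)) \<and> (\<forall>v. blinfun_rational_on U (\<lambda>x. D x v))"
  using assms(2)
proof (induction rule: blinfun_rational_on.induct)
  case (const c)
  show ?case by (rule exI[of _ "\<lambda>x h. 0"]) (auto intro: blinfun_rational_on.const)
next
  case (linear f)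
  show ?case
    by (rule exI[of _ "\<lambda>x. f"]) (auto intro: blinfun_rational_on.const bounded_linear_imp_has_derivative linear)
next
  case (add f g)
  then obtain Df Dg where "\<forall>x\<in>U. (f has_derivative Df x) (at x)" "\<forall>v. blinfun_rational_on U (\<lambda>x. Df x v)"
    "\<forall>x\<in>U. (g has_derivative Dg x) (at x)" "\<forall>v. blinfun_rational_on U (\<lambda>x. Dg x v)" by blast
  then show ?case
    by (intro exI[of _ "\<lambda>x h. Df x h + Dg x h"]) (auto intro: has_derivative_add blinfun_rational_on.add)
next
  case (diff f g)
  then obtain Df Dg where "\<forall>x\<in>U. (f has_derivative Df x) (at x)" "\<forall>v. blinfun_rational_on U (\<lambda>x. Df x v)"
    "\<forall>x\<in>U. (g has_derivative Dg x) (at x)" "\<forall>v. blinfun_rational_on U (\<lambda>x. Dg x v)" by blast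
  then show ?case
    by (intro exI[of _ "\<lambda>x h. Df x h - Dg x h"]) (auto intro: has_derivative_diff blinfun_rational_on.diff)
next
  case (compose f g)
  then obtain Df Dg where f: "\<forall>x\<in>U. (f has_derivative Df x) (at x)" "\<forall>v. blinfun_rational_on U (\<lambda>x. Df x v)"
    and g: "\<forall>x\<in>U. (g has_derivative Dg x) (at x)" "\<forall>v. blinfun_rational_on U (\<lambda>x. Dg x v)" by blast
  show ?case
  proof (intro exI[of _ "\<lambda>x h. (f x o\<^sub>L Dg x h) + (Df x h o\<^sub>L g x)"] conjI ballI allI)
    fix x assume "x \<in> U"
    with f g show "((\<lambda>x. f x o\<^sub>L g x) has_derivative (\<lambda>h. (f x o\<^sub>L Dg x h) + (Df x h o\<^sub>L g x))) (at x)"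
      by (blast intro: bounded_bilinear.FDERIV[OF bounded_bilinear_blinfun_compose])
  next
    fix v show "blinfun_rational_on U (\<lambda>x. (f x o\<^sub>L Dg x v) + (Df x v o\<^sub>L g x))"
      using f g compose.hyps by (intro blinfun_rational_on.add blinfun_rational_on.compose) auto
  qed
next
  case (inverse f)
  then obtain D where D: "\<forall>x\<in>U. (f has_derivative D x) (at x)" "\<forall>v. blinfun_rational_on U (\<lambda>x. D x v)"
    by blast
  have inv_f: "blinfun_rational_on U (\<lambda>x. blinfun_inv (f x))"
    using inverse.hyps by (rule blinfun_rational_on.inverse)
  show ?case
  proof (intro exI[of _ "\<lambda>x h. - (blinfun_inv (f x) o\<^sub>L D x h o\<^sub>L blinfun_inv (f x))"] conjI ballI allI)
    fix x assume "x \<in> U"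
    then show "((\<lambda>x. blinfun_inv (f x)) has_derivative
        (\<lambda>h. - (blinfun_inv (f x) o\<^sub>L D x h o\<^sub>L blinfun_inv (f x)))) (at x)"
      using has_derivative_compose[OF _ has_derivative_blinfun_inv] D(1) inverse.hyps(2) by blast
  next
    fix v
    have "blinfun_rational_on U (\<lambda>x. 0 - (blinfun_inv (f x) o\<^sub>L D x v o\<^sub>L blinfun_inv (f x)))"
      using inv_f D(2) by (intro blinfun_rational_on.diff blinfun_rational_on.const blinfun_rational_on.compose) auto
    then show "blinfun_rational_on U (\<lambda>x. - (blinfun_inv (f x) o\<^sub>L D x v o\<^sub>L blinfun_inv (f x)))" by simp
  qed
next
  case (cong f g)
  then obtain D where D: "\<forall>x\<in>U. (f has_derivative D x) (at x)" "\<forall>v. blinfun_rational_on U (\<lambda>x. D x v)"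
    by blast
  have "(g has_derivative D x) (at x)" if "x \<in> U" for x
    by (rule has_derivative_transform_within_open[OF _ U that]) (use D that cong.hyps in auto)
  with D(2) show ?case by blast
qed

lemma C_infinity_on_blinfun_rational:
  assumes U: "open U" and f: "blinfun_rational_on U f"
  shows "C_infinity_on U f"
  unfolding C_infinity_on_def
proof (intro exI[of _ "Collect (blinfun_rational_on U)"] conjI ballI allI)
  show "f \<in> Collect (blinfun_rational_on U)" using f by simp
  fix g assume "g \<in> Collect (blinfun_rational_on U)"
  then obtain D where D: "\<forall>x\<in>U. (g has_derivative D x) (at x)" "\<forall>v. blinfun_rational_on U (\<lambda>x. D x v)"
    using blinfun_rational_on_has_derivative[OF U] by blast
  then show "g differentiable_on U"
    by (auto simp: differentiable_on_def differentiable_def intro: has_derivative_at_withinI)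
  fix v
  have "blinfun_rational_on U (\<lambda>x. frechet_derivative g (at x) v)"
    by (rule blinfun_rational_on.cong[OF D(2)[rule_format, of v]]) (use D(1) frechet_derivative_at in metis)
  then show "(\<lambda>x. frechet_derivative g (at x) v) \<in> Collect (blinfun_rational_on U)" by simp
qed

lemma tangent_space_derivative_eq_0:
  fixes f :: "'a::real_normed_vector \<Rightarrow> 'b::real_normed_vector"
  assumes v: "v \<in> tangent_space M p" and U: "open U" "p \<in> U"
    and f: "(f has_derivative f') (at p)" and zero: "\<And>q. q \<in> M \<inter> U \<Longrightarrow> f q = 0"
  shows "f' v = 0"
proof -
  obtain \<gamma> e where e: "e > 0" and \<gamma>0: "\<gamma> 0 = p" and \<gamma>M: "\<forall>t\<in>{-e<..<e}. \<gamma> t \<in> M"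
    and \<gamma>': "(\<gamma> has_vector_derivative v) (at 0)"
    using v unfolding tangent_space_def by blast
  have "isCont \<gamma> 0" by (rule has_vector_derivative_continuous[OF \<gamma>'])
  then have "\<forall>\<^sub>F t in at 0. \<gamma> t \<in> U" using U \<gamma>0 by (simp add: continuous_at topological_tendstoD)
  then obtain d where d: "d > 0" "\<And>t. t \<noteq> 0 \<Longrightarrow> \<bar>t\<bar> < d \<Longrightarrow> \<gamma> t \<in> U"
    by (auto simp: eventually_at dist_real_def)
  have "f (\<gamma> t) = 0" if "t \<in> {- min e d<..<min e d}" for t
    using that zero[of "\<gamma> t"] \<gamma>M d(2)[of t] U(2) \<gamma>0 e by (cases "t = 0") (auto simp: abs_less_iff)
  then have "((\<lambda>t. f (\<gamma> t)) has_derivative (\<lambda>t. 0)) (at 0)"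
    by (intro has_derivative_transform_within_open[OF has_derivative_const, of "{- min e d<..<min e d}"])
      (use e d in auto)
  moreover have "((\<lambda>t. f (\<gamma> t)) has_derivative (\<lambda>t. f' (t *\<^sub>R v))) (at 0)"
    using has_derivative_compose[OF \<gamma>'[unfolded has_vector_derivative_def]] f \<gamma>0 by simp
  ultimately have "(\<lambda>t. f' (t *\<^sub>R v)) = (\<lambda>t. 0)" by (rule has_derivative_unique[rotated])
  then show ?thesis by (metis scaleR_one)
qed

lemma open_line_neighbourhood:
  fixes v :: "'a::real_normed_vector"
  assumes "open U" "p \<in> U"
  obtains e where "e > 0" "\<And>t. t \<in> {-e<..<e} \<Longrightarrow> p + t *\<^sub>R v \<in> U"
proof -
  have "isCont (\<lambda>t. p + t *\<^sub>R v) 0" by (intro continuous_intros)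
  then have "\<forall>\<^sub>F t in at 0. p + t *\<^sub>R v \<in> U"
    using assms by (simp add: isCont_def tendsto_def)
  then obtain e where e: "e > 0" "\<And>t. t \<noteq> 0 \<Longrightarrow> dist t 0 < e \<Longrightarrow> p + t *\<^sub>R v \<in> U"
    by (auto simp: eventually_at)
  show ?thesis
  proof (rule that[OF e(1)])
    fix t :: real assume "t \<in> {-e<..<e}"
    then show "p + t *\<^sub>R v \<in> U" using e(2)[of t] assms(2) by (cases "t = 0") (auto simp: dist_real_def)
  qed
qed

lemma is_rep_right_inverse:
  assumes H: "matrix_group H" and rep: "is_rep H W \<rho>" and k: "k \<in> H"
  obtains k' where "k' \<in> H" "\<And>x. x \<in> W \<Longrightarrow> \<rho> k (\<rho> k' x) = x"
proof
  have inv: "invertible k" and k': "matrix_inv k \<in> H" using H k by (auto simp: matrix_group_def)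
  have "k ** matrix_inv k = mat 1"
    using someI_ex[OF inv[unfolded invertible_def]] by (simp add: matrix_inv_def)
  with rep k k' show "matrix_inv k \<in> H" "\<And>x. x \<in> W \<Longrightarrow> \<rho> k (\<rho> (matrix_inv k) x) = x"
    unfolding is_rep_def by metis+
qed

lemma subspace_symH: "subspace (symH H \<rho>)"
  unfolding subspace_def symH_def
  by (auto simp: blinfun.add_left blinfun.scaleR_left inner_add_left inner_add_right
      blinfun.add_right blinfun.scaleR_right)

lemma subspace_kernel: "subspace (kernel t)"
  unfolding kernel_def subspace_def by (auto simp: blinfun.add_right blinfun.scaleR_right)

lemma
  assumes "t \<in> symH H \<rho>"
  shows symH_symmetric: "inner (t x) y = inner x (t y)"
    and symH_equivariant: "h \<in> H \<Longrightarrow> t (\<rho> h x) = \<rho> h (t x)"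
  using assms by (simp_all add: symH_def)

lemma orth_rep_inner:
  assumes "orth_rep H \<rho>" "h \<in> H"
  shows "inner (\<rho> h x) (\<rho> h y) = inner x y"
proof -
  have "norm (\<rho> h z) = norm z" for z using assms by (simp add: orth_rep_def)
  then show ?thesis by (simp add: dot_norm blinfun.add_right[symmetric])
qed

lemma orth_rep_is_rep_kernel:
  assumes "orth_rep H \<rho>" "s \<in> symH H \<rho>"
  shows "is_rep H (kernel s) (\<lambda>h. blinfun_apply (\<rho> h))"
  using assms subspace_kernel[of s]
  by (auto simp: is_rep_def orth_rep_def kernel_def symH_def continuous_on_subset)

lemma rep_iso_G_dim_eq:
  assumes "rep_iso_G G H \<rho> U \<rho>W W" "subspace U"
  shows "dim W = dim U"
  using assms bij_betw_linear_dim_eq unfolding rep_iso_G_def by blast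

lemma rep_iso_G_transfer:
  assumes iso: "rep_iso_G G H \<rho> U \<rho>W W" and T: "linear T" "bij_betw T U' U"
    and T_equivariant: "\<And>k x. k \<in> H \<Longrightarrow> x \<in> U' \<Longrightarrow> T (\<rho> k x) = \<rho> k (T x)"
  shows "rep_iso_G G H \<rho> U' \<rho>W W"
proof -
  obtain g \<phi> where g: "g \<in> G" "H = (\<lambda>k. g ** k ** matrix_inv g) ` H"
    and \<phi>: "linear \<phi>" "bij_betw \<phi> U W"
    and \<phi>_equivariant: "\<And>k x. k \<in> H \<Longrightarrow> x \<in> U \<Longrightarrow> \<rho>W (g ** k ** matrix_inv g) (\<phi> x) = \<phi> (\<rho> k x)"
    using iso unfolding rep_iso_G_def by blast
  have "T x \<in> U" if "x \<in> U'" for x using T(2) that by (auto simp: bij_betw_def)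
  then show ?thesis
    unfolding rep_iso_G_def
    using g linear_compose[OF T(1) \<phi>(1)] bij_betw_trans[OF T(2) \<phi>(2)] \<phi>_equivariant T_equivariant
    by (intro bexI[OF _ g(1)] conjI exI[of _ "\<phi> \<circ> T"]) auto
qed

lemma orth_rep_inv_inner:
  assumes "orth_rep H \<rho>"
  shows "inv_inner H (\<lambda>h. blinfun_apply (\<rho> h)) W inner"
  using orth_rep_inner[OF assms] by (simp add: inv_inner_def inner_commute inner_add_left inner_add_right)

section \<open>Invariant inner products and the dimension d(sigma)\<close>

lemma sym_rep_orth_proj:
  assumes "f \<in> sym_rep K \<rho> W b" "subspace W"
  shows "f (orth_proj W x) = f x"
proof -
  have "f (x - orth_proj W x) = 0"
    using assms orth_proj_orthogonal[OF assms(2)] by (simp add: sym_rep_def)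
  then show ?thesis by (simp add: blinfun.diff_right)
qed

lemma sym_rep_in:
  assumes "f \<in> sym_rep K \<rho> W b" "subspace W"
  shows "f x \<in> W"
proof -
  have "f (orth_proj W x) \<in> W" using assms orth_proj_in[OF assms(2)] by (simp add: sym_rep_def)
  then show ?thesis by (simp add: sym_rep_orth_proj[OF assms])
qed

text \<open>The data of an isomorphism in \<open>R_G\<close>: \<open>\<phi>\<close> intertwines \<open>\<rho>\<close> with \<open>\<rho>'\<close> composed with
  the conjugation \<open>\<alpha>\<close>.\<close>

locale conj_rep_iso =
  fixes H :: "(real^'n^'n) set" and \<alpha> :: "real^'n^'n \<Rightarrow> real^'n^'n"
    and \<rho> :: "real^'n^'n \<Rightarrow> 'v::euclidean_space \<Rightarrow> 'v" and U :: "'v set"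
    and \<rho>' :: "real^'n^'n \<Rightarrow> 'w::euclidean_space \<Rightarrow> 'w" and W :: "'w set"
    and \<phi> :: "'v \<Rightarrow> 'w"
  assumes rep: "is_rep H U \<rho>" and subspace_W: "subspace W" and conj: "\<alpha> ` H = H"
    and linear_\<phi>: "linear \<phi>" and bij_\<phi>: "bij_betw \<phi> U W"
    and equivariant: "\<And>k x. k \<in> H \<Longrightarrow> x \<in> U \<Longrightarrow> \<phi> (\<rho> k x) = \<rho>' (\<alpha> k) (\<phi> x)"
begin

lemma subspace_U: "subspace U" using rep by (simp add: is_rep_def)

lemma rep_in: "k \<in> H \<Longrightarrow> x \<in> U \<Longrightarrow> \<rho> k x \<in> U" using rep by (simp add: is_rep_def)

lemma \<phi>_in: "x \<in> U \<Longrightarrow> \<phi> x \<in> W" using bij_\<phi> by (auto simp: bij_betw_def)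

definition \<psi> :: "'w \<Rightarrow> 'v" where
  "\<psi> = (SOME \<psi>. range \<psi> \<subseteq> U \<and> linear \<psi> \<and> (\<forall>x\<in>U. \<psi> (\<phi> x) = x))"

lemma \<psi>: "\<psi> y \<in> U" "linear \<psi>" "x \<in> U \<Longrightarrow> \<psi> (\<phi> x) = x"
proof -
  have "\<exists>\<psi>. range \<psi> \<subseteq> U \<and> linear \<psi> \<and> (\<forall>x\<in>U. \<psi> (\<phi> x) = x)"
    using linear_exists_left_inverse_on[OF linear_\<phi> subspace_U] bij_\<phi> by (simp add: bij_betw_def)
  then have "range \<psi> \<subseteq> U \<and> linear \<psi> \<and> (\<forall>x\<in>U. \<psi> (\<phi> x) = x)"
    unfolding \<psi>_def by (rule someI_ex)
  then show "\<psi> y \<in> U" "linear \<psi>" "x \<in> U \<Longrightarrow> \<psi> (\<phi> x) = x" by auto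
qed

lemma \<phi>_\<psi>: "y \<in> W \<Longrightarrow> \<phi> (\<psi> y) = y"
  using bij_\<phi> \<psi>(3) by (force simp: bij_betw_def)

lemma \<psi>_equivariant: "k \<in> H \<Longrightarrow> y \<in> W \<Longrightarrow> \<psi> (\<rho>' (\<alpha> k) y) = \<rho> k (\<psi> y)"
  using equivariant[of k "\<psi> y"] \<psi> \<phi>_\<psi> rep_in by metis

lemma inv_inner_pullback:
  assumes b: "inv_inner H \<rho>' W b"
  shows "inv_inner H \<rho> U (\<lambda>x y. b (\<phi> x) (\<phi> y))"
  unfolding inv_inner_def
proof (intro conjI ballI allI impI)
  fix x y z assume "x \<in> U" "y \<in> U" "z \<in> U"
  with b show "b (\<phi> x) (\<phi> y) = b (\<phi> y) (\<phi> x)"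
    and "b (\<phi> (x + y)) (\<phi> z) = b (\<phi> x) (\<phi> z) + b (\<phi> y) (\<phi> z)"
    by (simp_all add: inv_inner_def \<phi>_in linear_add[OF linear_\<phi>])
next
  fix c x y assume "x \<in> U" "y \<in> U"
  with b show "b (\<phi> (c *\<^sub>R x)) (\<phi> y) = c * b (\<phi> x) (\<phi> y)"
    by (simp add: inv_inner_def \<phi>_in linear_scale[OF linear_\<phi>])
next
  fix x assume "x \<in> U" "x \<noteq> 0"
  then have "\<phi> x \<noteq> 0" using \<psi>(3) linear_0[OF \<psi>(2)] by metis
  with b \<open>x \<in> U\<close> show "0 < b (\<phi> x) (\<phi> x)" by (simp add: inv_inner_def \<phi>_in)
next
  fix k x y assume "k \<in> H" "x \<in> U" "y \<in> U"
  moreover have "\<alpha> k \<in> H" using conj \<open>k \<in> H\<close> by blast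
  ultimately show "b (\<phi> (\<rho> k x)) (\<phi> (\<rho> k y)) = b (\<phi> x) (\<phi> y)"
    using b by (simp add: inv_inner_def equivariant \<phi>_in)
qed

lemma inv_inner_pushforward:
  assumes a: "inv_inner H \<rho> U a"
  shows "inv_inner H \<rho>' W (\<lambda>x y. a (\<psi> x) (\<psi> y))"
  unfolding inv_inner_def
proof (intro conjI ballI allI impI)
  fix x y z assume "x \<in> W" "y \<in> W" "z \<in> W"
  with a show "a (\<psi> x) (\<psi> y) = a (\<psi> y) (\<psi> x)"
    and "a (\<psi> (x + y)) (\<psi> z) = a (\<psi> x) (\<psi> z) + a (\<psi> y) (\<psi> z)"
    by (simp_all add: inv_inner_def \<psi>(1) linear_add[OF \<psi>(2)])
next
  fix c x y assume "x \<in> W" "y \<in> W"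
  with a show "a (\<psi> (c *\<^sub>R x)) (\<psi> y) = c * a (\<psi> x) (\<psi> y)"
    by (simp add: inv_inner_def \<psi>(1) linear_scale[OF \<psi>(2)])
next
  fix x assume "x \<in> W" "x \<noteq> 0"
  then have "\<psi> x \<noteq> 0" using \<phi>_\<psi> linear_0[OF linear_\<phi>] by metis
  with a show "0 < a (\<psi> x) (\<psi> x)" by (simp add: inv_inner_def \<psi>(1))
next
  fix h x y assume "h \<in> H" "x \<in> W" "y \<in> W"
  moreover obtain k where "k \<in> H" "h = \<alpha> k" using conj \<open>h \<in> H\<close> by blast
  ultimately show "a (\<psi> (\<rho>' h x)) (\<psi> (\<rho>' h y)) = a (\<psi> x) (\<psi> y)"
    using a by (simp add: inv_inner_def \<psi>_equivariant \<psi>(1))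
qed

lemma \<rho>'_in: "k \<in> H \<Longrightarrow> y \<in> W \<Longrightarrow> \<rho>' (\<alpha> k) y \<in> W"
  by (metis \<phi>_\<psi> \<phi>_in \<psi>(1) equivariant rep_in)

definition \<Phi> :: "'v \<Rightarrow>\<^sub>L 'w" where "\<Phi> = Blinfun (\<lambda>x. \<phi> (orth_proj U x))"
definition \<Psi> :: "'w \<Rightarrow>\<^sub>L 'v" where "\<Psi> = Blinfun (\<lambda>y. \<psi> (orth_proj W y))"

lemma \<Phi>_apply: "\<Phi> x = \<phi> (orth_proj U x)"
  unfolding \<Phi>_def using linear_compose[OF linear_orth_proj[OF subspace_U] linear_\<phi>]
  by (simp add: blinfun_apply_Blinfun_linear o_def)

lemma \<Psi>_apply: "\<Psi> y = \<psi> (orth_proj W y)"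
  unfolding \<Psi>_def using linear_compose[OF linear_orth_proj[OF subspace_W] \<psi>(2)]
  by (simp add: blinfun_apply_Blinfun_linear o_def)

lemma \<Phi>_eq_0: "\<forall>u\<in>U. inner x u = 0 \<Longrightarrow> \<Phi> x = 0"
  by (simp add: \<Phi>_apply orth_proj_eq_0[OF subspace_U] linear_0[OF linear_\<phi>])

lemma \<Psi>_eq_0: "\<forall>w\<in>W. inner y w = 0 \<Longrightarrow> \<Psi> y = 0"
  by (simp add: \<Psi>_apply orth_proj_eq_0[OF subspace_W] linear_0[OF \<psi>(2)])

lemma \<Phi>_in_U: "x \<in> U \<Longrightarrow> \<Phi> x = \<phi> x" by (simp add: \<Phi>_apply orth_proj_self[OF subspace_U])
lemma \<Psi>_in_W: "y \<in> W \<Longrightarrow> \<Psi> y = \<psi> y" by (simp add: \<Psi>_apply orth_proj_self[OF subspace_W])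

lemma \<Phi>_\<Psi>: "\<Phi> (\<Psi> y) = orth_proj W y"
  by (simp add: \<Phi>_apply \<Psi>_apply orth_proj_self[OF subspace_U] \<psi>(1) \<phi>_\<psi> orth_proj_in[OF subspace_W])

lemma \<Psi>_\<Phi>: "\<Psi> (\<Phi> x) = orth_proj U x"
  by (simp add: \<Phi>_apply \<Psi>_apply orth_proj_self[OF subspace_W] \<psi>(3) \<phi>_in orth_proj_in[OF subspace_U])

lemma sym_rep_pull:
  assumes f: "f \<in> sym_rep H \<rho>' W b"
  shows "\<Psi> o\<^sub>L f o\<^sub>L \<Phi> \<in> sym_rep H \<rho> U (\<lambda>x y. b (\<phi> x) (\<phi> y))" and "\<Phi> o\<^sub>L (\<Psi> o\<^sub>L f o\<^sub>L \<Phi>) o\<^sub>L \<Psi> = f"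
proof -
  note fW = sym_rep_in[OF f subspace_W]
  have apply_U: "\<Psi> (f (\<Phi> x)) = \<psi> (f (\<phi> x))" if "x \<in> U" for x
    using that by (simp add: \<Phi>_in_U \<Psi>_in_W fW)
  show "\<Psi> o\<^sub>L f o\<^sub>L \<Phi> \<in> sym_rep H \<rho> U (\<lambda>x y. b (\<phi> x) (\<phi> y))"
    unfolding sym_rep_def
  proof (intro CollectI conjI ballI allI impI)
    fix x y assume "x \<in> U" "y \<in> U"
    with f fW show "b (\<phi> ((\<Psi> o\<^sub>L f o\<^sub>L \<Phi>) x)) (\<phi> y) = b (\<phi> x) (\<phi> ((\<Psi> o\<^sub>L f o\<^sub>L \<Phi>) y))"
      by (simp add: apply_U \<phi>_\<psi> \<phi>_in sym_rep_def)
  next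
    fix k x assume "k \<in> H" "x \<in> U"
    moreover have "\<alpha> k \<in> H" using conj \<open>k \<in> H\<close> by blast
    ultimately show "(\<Psi> o\<^sub>L f o\<^sub>L \<Phi>) (\<rho> k x) = \<rho> k ((\<Psi> o\<^sub>L f o\<^sub>L \<Phi>) x)"
      using f fW by (simp add: apply_U rep_in equivariant \<psi>_equivariant \<phi>_in sym_rep_def)
  qed (simp_all add: \<Psi>_apply \<psi>(1) \<Phi>_eq_0 blinfun.zero_right)
  show "\<Phi> o\<^sub>L (\<Psi> o\<^sub>L f o\<^sub>L \<Phi>) o\<^sub>L \<Psi> = f"
    by (rule blinfun_eqI) (simp add: \<Phi>_\<Psi> fW orth_proj_self[OF subspace_W] sym_rep_orth_proj[OF f subspace_W])
qed

lemma sym_rep_push: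
  assumes g: "g \<in> sym_rep H \<rho> U (\<lambda>x y. b (\<phi> x) (\<phi> y))"
  shows "\<Phi> o\<^sub>L g o\<^sub>L \<Psi> \<in> sym_rep H \<rho>' W b" and "\<Psi> o\<^sub>L (\<Phi> o\<^sub>L g o\<^sub>L \<Psi>) o\<^sub>L \<Phi> = g"
proof -
  note gU = sym_rep_in[OF g subspace_U]
  have apply_W: "\<Phi> (g (\<Psi> y)) = \<phi> (g (\<psi> y))" if "y \<in> W" for y
    using that by (simp add: \<Phi>_in_U \<Psi>_in_W gU)
  show "\<Phi> o\<^sub>L g o\<^sub>L \<Psi> \<in> sym_rep H \<rho>' W b"
    unfolding sym_rep_def
  proof (intro CollectI conjI ballI allI impI)
    fix y z assume "y \<in> W" "z \<in> W"
    then show "b ((\<Phi> o\<^sub>L g o\<^sub>L \<Psi>) y) z = b y ((\<Phi> o\<^sub>L g o\<^sub>L \<Psi>) z)"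
      using g \<phi>_\<psi> \<psi>(1) by (simp add: apply_W sym_rep_def) metis
  next
    fix h y assume "h \<in> H" "y \<in> W"
    moreover obtain k where "k \<in> H" "h = \<alpha> k" using conj \<open>h \<in> H\<close> by blast
    ultimately show "(\<Phi> o\<^sub>L g o\<^sub>L \<Psi>) (\<rho>' h y) = \<rho>' h ((\<Phi> o\<^sub>L g o\<^sub>L \<Psi>) y)"
      using g gU by (simp add: apply_W \<rho>'_in \<psi>_equivariant \<psi>(1) equivariant sym_rep_def)
  qed (simp_all add: \<Phi>_apply \<phi>_in orth_proj_in[OF subspace_U] \<Psi>_eq_0 blinfun.zero_right)
  show "\<Psi> o\<^sub>L (\<Phi> o\<^sub>L g o\<^sub>L \<Psi>) o\<^sub>L \<Phi> = g"
    by (rule blinfun_eqI) (simp add: \<Psi>_\<Phi> gU orth_proj_self[OF subspace_U] sym_rep_orth_proj[OF g subspace_U])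
qed

lemma dim_sym_rep_pullback:
  "dim (sym_rep H \<rho> U (\<lambda>x y. b (\<phi> x) (\<phi> y))) = dim (sym_rep H \<rho>' W b)"
  by (rule dim_eq_linear_inverses[OF bounded_linear.linear bounded_linear.linear,
        OF bounded_linear_blinfun_sandwich bounded_linear_blinfun_sandwich])
    (use sym_rep_pull sym_rep_push in auto)

end

locale two_invariant_inners =
  fixes H :: "(real^'n^'n) set" and \<rho> :: "real^'n^'n \<Rightarrow> 'v::euclidean_space \<Rightarrow> 'v"
    and U :: "'v set" and b :: "'v \<Rightarrow> 'v \<Rightarrow> real"
  assumes matrix_group: "matrix_group H" and rep: "is_rep H U \<rho>"
    and inv_inner_inner: "inv_inner H \<rho> U inner" and inv_inner_b: "inv_inner H \<rho> U b"
begin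

lemma subspace_U: "subspace U" using rep by (simp add: is_rep_def)

lemma rep_in: "k \<in> H \<Longrightarrow> x \<in> U \<Longrightarrow> \<rho> k x \<in> U" using rep by (simp add: is_rep_def)

lemma
  shows b_sym: "x \<in> U \<Longrightarrow> y \<in> U \<Longrightarrow> b x y = b y x"
    and b_add: "x \<in> U \<Longrightarrow> y \<in> U \<Longrightarrow> z \<in> U \<Longrightarrow> b (x + y) z = b x z + b y z"
    and b_scale: "x \<in> U \<Longrightarrow> y \<in> U \<Longrightarrow> b (c *\<^sub>R x) y = c * b x y"
    and b_pos: "x \<in> U \<Longrightarrow> x \<noteq> 0 \<Longrightarrow> b x x > 0"
    and b_invariant: "k \<in> H \<Longrightarrow> x \<in> U \<Longrightarrow> y \<in> U \<Longrightarrow> b (\<rho> k x) (\<rho> k y) = b x y"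
  using inv_inner_b by (simp_all add: inv_inner_def)

lemma gram_operator_exists:
  "\<exists>T. linear T \<and> (\<forall>x. T x \<in> U) \<and> (\<forall>x\<in>U. \<forall>y\<in>U. b x y = inner (T x) y)"
proof -
  let ?P = "orth_proj U"
  note P = orth_proj_in[OF subspace_U] linear_add[OF linear_orth_proj[OF subspace_U]]
    linear_scale[OF linear_orth_proj[OF subspace_U]]
  have "linear (\<lambda>x. b (?P x) (?P y))" for y by (rule linearI) (simp_all add: P b_add b_scale)
  moreover have "linear (\<lambda>y. b (?P x) (?P y))" for x
    by (rule linearI)
      (simp_all add: P b_sym[of "?P x"] b_add b_scale subspace_add[OF subspace_U] subspace_scale[OF subspace_U])
  ultimately obtain T0 where T0: "linear T0" "\<And>x y. b (?P x) (?P y) = inner (T0 x) y"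
    using linear_inner_representation[of "\<lambda>x y. b (?P x) (?P y)"] by blast
  have "linear (\<lambda>x. ?P (T0 x))"
    using linear_compose[OF T0(1) linear_orth_proj[OF subspace_U]] by (simp add: o_def)
  moreover have "b x y = inner (?P (T0 x)) y" if "x \<in> U" "y \<in> U" for x y
    using that T0(2)[of x y] by (simp add: orth_proj_inner[OF subspace_U] orth_proj_self[OF subspace_U])
  ultimately show ?thesis using P(1) by blast
qed

definition gram :: "'v \<Rightarrow> 'v" where
  "gram = (SOME T. linear T \<and> (\<forall>x. T x \<in> U) \<and> (\<forall>x\<in>U. \<forall>y\<in>U. b x y = inner (T x) y))"

lemma gram: "linear gram" "gram x \<in> U" "x \<in> U \<Longrightarrow> y \<in> U \<Longrightarrow> b x y = inner (gram x) y"
  using someI_ex[OF gram_operator_exists] unfolding gram_def[symmetric] by blast+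

lemma inj_on_gram: "inj_on gram U"
proof (subst linear_inj_on_iff_eq_0[OF gram(1) subspace_U], intro ballI impI)
  fix x assume "x \<in> U" "gram x = 0"
  then have "b x x = 0" by (simp add: gram(3))
  with b_pos \<open>x \<in> U\<close> show "x = 0" by fastforce
qed

lemma gram_image: "gram ` U = U"
  using linear_inj_on_endomorphism_surj[OF gram(1) subspace_U _ inj_on_gram] gram(2) by blast

lemma gram_equivariant:
  assumes k: "k \<in> H" and x: "x \<in> U"
  shows "gram (\<rho> k x) = \<rho> k (gram x)"
proof (rule subspace_eq_if_inner_eq[OF subspace_U gram(2) rep_in[OF k gram(2)]])
  obtain k' where k': "k' \<in> H" "\<And>y. y \<in> U \<Longrightarrow> \<rho> k (\<rho> k' y) = y"
    using is_rep_right_inverse[OF matrix_group rep k] by blast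
  fix y assume y: "y \<in> U"
  have "inner (gram (\<rho> k x)) y = b (\<rho> k x) (\<rho> k (\<rho> k' y))" by (simp add: gram(3) rep_in k x y k')
  also have "\<dots> = inner (gram x) (\<rho> k' y)"
    using b_invariant[OF k x rep_in[OF k'(1) y]] gram(3)[OF x rep_in[OF k'(1) y]] by (rule trans)
  also have "\<dots> = inner (\<rho> k (gram x)) (\<rho> k (\<rho> k' y))"
    using inv_inner_inner k gram(2) rep_in[OF k'(1) y] by (simp add: inv_inner_def)
  also have "\<dots> = inner (\<rho> k (gram x)) y" by (simp add: k' y)
  finally show "inner (gram (\<rho> k x)) y = inner (\<rho> k (gram x)) y" .
qed

definition gram_inv :: "'v \<Rightarrow> 'v" where
  "gram_inv = (SOME S. range S \<subseteq> U \<and> linear S \<and> (\<forall>x\<in>U. S (gram x) = x))"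

lemma gram_inv: "gram_inv y \<in> U" "linear gram_inv" "x \<in> U \<Longrightarrow> gram_inv (gram x) = x"
  using someI_ex[OF linear_exists_left_inverse_on[OF gram(1) subspace_U inj_on_gram]]
  unfolding gram_inv_def[symmetric] by blast+

lemma gram_gram_inv: "y \<in> U \<Longrightarrow> gram (gram_inv y) = y"
  using gram_image gram_inv(3) by force

lemma gram_inv_equivariant:
  assumes k: "k \<in> H" and y: "y \<in> U"
  shows "gram_inv (\<rho> k y) = \<rho> k (gram_inv y)"
proof -
  obtain x where "x \<in> U" "y = gram x" using y gram_image by blast
  then show ?thesis by (simp add: gram_equivariant[OF k, symmetric] gram_inv(3) rep_in k)
qed

lemma sym_rep_to_inner:
  assumes f: "f \<in> sym_rep H \<rho> U b"
  shows "Blinfun gram o\<^sub>L f \<in> sym_rep H \<rho> U inner" and "Blinfun gram_inv o\<^sub>L (Blinfun gram o\<^sub>L f) = f"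
proof -
  note fU = sym_rep_in[OF f subspace_U]
  show "Blinfun gram o\<^sub>L f \<in> sym_rep H \<rho> U inner"
    unfolding sym_rep_def
  proof (intro CollectI conjI ballI allI impI)
    fix x y assume x: "x \<in> U" and y: "y \<in> U"
    have "inner (gram (f x)) y = b (f x) y" by (simp add: gram(3) fU y)
    also have "\<dots> = b x (f y)" using f x y by (simp add: sym_rep_def)
    also have "\<dots> = b (f y) x" by (rule b_sym[OF x fU])
    also have "\<dots> = inner x (gram (f y))" by (simp add: gram(3) fU x inner_commute)
    finally show "inner ((Blinfun gram o\<^sub>L f) x) y = inner x ((Blinfun gram o\<^sub>L f) y)"
      by (simp add: blinfun_apply_Blinfun_linear gram(1))
  qed (use f fU in \<open>simp_all add: blinfun_apply_Blinfun_linear gram gram_equivariant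
        linear_0[OF gram(1)] sym_rep_def\<close>)
  show "Blinfun gram_inv o\<^sub>L (Blinfun gram o\<^sub>L f) = f"
    by (rule blinfun_eqI) (simp add: blinfun_apply_Blinfun_linear gram gram_inv fU)
qed

lemma sym_rep_from_inner:
  assumes g: "g \<in> sym_rep H \<rho> U inner"
  shows "Blinfun gram_inv o\<^sub>L g \<in> sym_rep H \<rho> U b" and "Blinfun gram o\<^sub>L (Blinfun gram_inv o\<^sub>L g) = g"
proof -
  note gU = sym_rep_in[OF g subspace_U]
  show "Blinfun gram_inv o\<^sub>L g \<in> sym_rep H \<rho> U b"
    unfolding sym_rep_def
  proof (intro CollectI conjI ballI allI impI)
    fix x y assume x: "x \<in> U" and y: "y \<in> U"
    have "b (gram_inv (g x)) y = inner (g x) y" by (simp add: gram(3) gram_gram_inv gram_inv(1) gU y)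
    also have "\<dots> = inner x (g y)" using g x y by (simp add: sym_rep_def)
    also have "\<dots> = b (gram_inv (g y)) x" by (simp add: gram(3) gram_gram_inv gram_inv(1) gU x inner_commute)
    also have "\<dots> = b x (gram_inv (g y))" by (rule b_sym[OF gram_inv(1) x])
    finally show "b ((Blinfun gram_inv o\<^sub>L g) x) y = b x ((Blinfun gram_inv o\<^sub>L g) y)"
      by (simp add: blinfun_apply_Blinfun_linear gram_inv(2))
  qed (use g gU in \<open>simp_all add: blinfun_apply_Blinfun_linear gram_inv gram_inv_equivariant
        linear_0[OF gram_inv(2)] sym_rep_def\<close>)
  show "Blinfun gram o\<^sub>L (Blinfun gram_inv o\<^sub>L g) = g"
    by (rule blinfun_eqI) (simp add: blinfun_apply_Blinfun_linear gram(1) gram_inv(2) gram_gram_inv gU)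
qed

lemma dim_sym_rep_change_inner: "dim (sym_rep H \<rho> U b) = dim (sym_rep H \<rho> U inner)"
  by (rule dim_eq_linear_inverses[OF bounded_linear.linear bounded_linear.linear,
        OF bounded_bilinear.bounded_linear_right bounded_bilinear.bounded_linear_right,
        OF bounded_bilinear_blinfun_compose bounded_bilinear_blinfun_compose])
    (use sym_rep_to_inner sym_rep_from_inner in auto)

end

section \<open>The Schur complement chart\<close>

locale schur_chart =
  fixes H :: "(real^'n^'n) set" and \<rho> :: "real^'n^'n \<Rightarrow> ('v::euclidean_space \<Rightarrow>\<^sub>L 'v)"
    and s :: "'v \<Rightarrow>\<^sub>L 'v"
  assumes matrix_group: "matrix_group H" and orth_rep: "orth_rep H \<rho>" and s_in: "s \<in> symH H \<rho>"
begin

abbreviation "E \<equiv> symH H \<rho>"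
abbreviation "K \<equiv> kernel s"

lemma subspace_E: "subspace E" by (rule subspace_symH)

lemma kernel_rep: "is_rep H K (\<lambda>h. blinfun_apply (\<rho> h))"
  by (rule orth_rep_is_rep_kernel[OF orth_rep s_in])

lemma K_invariant: "h \<in> H \<Longrightarrow> x \<in> K \<Longrightarrow> \<rho> h x \<in> K"
  using kernel_rep by (simp add: is_rep_def)

definition P :: "'v \<Rightarrow>\<^sub>L 'v" where "P = Blinfun (orth_proj K)"

lemma P_apply: "P x = orth_proj K x"
  by (simp add: P_def blinfun_apply_Blinfun_linear linear_orth_proj subspace_kernel)

lemma P_in: "P x \<in> K" by (simp add: P_apply orth_proj_in subspace_kernel)
lemma P_self: "x \<in> K \<Longrightarrow> P x = x" by (simp add: P_apply orth_proj_self subspace_kernel)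
lemma P_P: "P (P x) = P x" by (simp add: P_self P_in)
lemma P_symmetric: "inner (P x) y = inner x (P y)" by (simp add: P_apply orth_proj_symmetric subspace_kernel)
lemma P_inner: "u \<in> K \<Longrightarrow> inner (P x) u = inner x u" by (simp add: P_apply orth_proj_inner subspace_kernel)
lemma s_P: "s (P x) = 0" using P_in by (simp add: kernel_def)
lemma P_s: "P (s x) = 0"
  unfolding P_apply by (rule orth_proj_eq_0[OF subspace_kernel]) (simp add: symH_symmetric[OF s_in] kernel_def)

lemma P_equivariant:
  assumes h: "h \<in> H"
  shows "P (\<rho> h x) = \<rho> h (P x)"
proof -
  obtain h' where h': "h' \<in> H" "\<And>x. \<rho> h (\<rho> h' x) = x"
    using is_rep_right_inverse[OF matrix_group _ h, of UNIV] orth_rep by (auto simp: orth_rep_def)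
  show ?thesis unfolding P_apply
  proof (rule orth_proj_unique[OF subspace_kernel])
    show "\<rho> h (orth_proj K x) \<in> K" using K_invariant[OF h P_in] by (simp add: P_apply)
    fix u assume u: "u \<in> K"
    have "inner (\<rho> h x - \<rho> h (P x)) u = inner (\<rho> h (x - P x)) (\<rho> h (\<rho> h' u))"
      by (simp add: h' blinfun.diff_right)
    also have "\<dots> = inner (x - P x) (\<rho> h' u)" by (rule orth_rep_inner[OF orth_rep h])
    also have "\<dots> = 0" using P_inner[OF K_invariant[OF h'(1) u]] by (simp add: inner_diff_left)
    finally show "inner (\<rho> h x - \<rho> h (orth_proj K x)) u = 0" by (simp add: P_apply)
  qed
qed

definition Q :: "'v \<Rightarrow>\<^sub>L 'v" where "Q = id_blinfun - P"

lemma Q_apply: "Q x = x - P x" by (simp add: Q_def blinfun.diff_left)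
lemma P_Q: "P (Q x) = 0" by (simp add: Q_apply blinfun.diff_right P_P)
lemma Q_P: "Q (P x) = 0" by (simp add: Q_apply P_P)
lemma Q_Q: "Q (Q x) = Q x" by (simp add: Q_apply blinfun.diff_right P_P)
lemma P_plus_Q: "P x + Q x = x" by (simp add: Q_apply)
lemma Q_symmetric: "inner (Q x) y = inner x (Q y)"
  by (simp add: Q_apply inner_diff_left inner_diff_right P_symmetric)
lemma Q_equivariant: "h \<in> H \<Longrightarrow> Q (\<rho> h x) = \<rho> h (Q x)"
  by (simp add: Q_apply P_equivariant blinfun.diff_right)

text \<open>Relative to the splitting of V into K and its orthogonal complement, \<open>A t\<close> replaces the
  K-block of t by the identity, so \<open>R t\<close> inverts the block \<open>Q t Q\<close>; \<open>F t\<close> is the Schur complement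
  of that block.\<close>

definition A :: "('v \<Rightarrow>\<^sub>L 'v) \<Rightarrow> 'v \<Rightarrow>\<^sub>L 'v" where "A t = (Q o\<^sub>L t o\<^sub>L Q) + P"

definition U :: "('v \<Rightarrow>\<^sub>L 'v) set" where "U = {t. inj (blinfun_apply (A t))}"

definition R :: "('v \<Rightarrow>\<^sub>L 'v) \<Rightarrow> 'v \<Rightarrow>\<^sub>L 'v" where "R t = blinfun_inv (A t)"

definition F :: "('v \<Rightarrow>\<^sub>L 'v) \<Rightarrow> 'v \<Rightarrow>\<^sub>L 'v" where
  "F t = (P o\<^sub>L t o\<^sub>L P) - (P o\<^sub>L t o\<^sub>L Q o\<^sub>L R t o\<^sub>L Q o\<^sub>L t o\<^sub>L P)"

lemma A_apply: "A t x = Q (t (Q x)) + P x" by (simp add: A_def blinfun.add_left)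

lemma F_apply: "F t x = P (t (P x)) - P (t (Q (R t (Q (t (P x))))))"
  by (simp add: F_def blinfun.diff_left)

lemma
  assumes "t \<in> U"
  shows A_R: "A t (R t x) = x" and R_A: "R t (A t x) = x"
  using assms by (simp_all add: U_def R_def blinfun_inv_left blinfun_inv_right)

lemma A_P: "A t (P x) = P x" by (simp add: A_apply Q_P P_P)
lemma P_A: "P (A t x) = P x" by (simp add: A_apply P_Q blinfun.add_right P_P)

lemma
  assumes "t \<in> U"
  shows R_P: "R t (P x) = P x" and P_R: "P (R t x) = P x" and Q_R: "Q (R t x) = R t (Q x)"
proof -
  show R_P: "R t (P x) = P x" using R_A[OF assms, of "P x"] by (simp only: A_P)
  show P_R: "P (R t x) = P x" for x using P_A[of t "R t x"] by (simp only: A_R[OF assms])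
  show "Q (R t x) = R t (Q x)" by (simp add: Q_apply P_R R_P blinfun.diff_right)
qed

lemma open_U: "open U"
proof -
  have "isCont A t" for t
    unfolding A_def[abs_def]
    by (intro continuous_intros linear_continuous_at bounded_linear_blinfun_sandwich)
  then have "open (A -` {T. inj (blinfun_apply T)})" by (rule continuous_open_vimage[OF open_inj_blinfun])
  then show ?thesis by (simp add: U_def vimage_def)
qed

lemma s_in_U: "s \<in> U"
proof -
  have "x = 0" if "A s x = 0" for x
  proof -
    have "s (Q x) = s x" by (simp add: Q_apply blinfun.diff_right s_P)
    moreover have "Q (s x) = s x" by (simp add: Q_apply P_s)
    ultimately have sx: "s x = - P x" using that by (simp add: A_apply eq_neg_iff_add_eq_0)
    have "inner (P x) (P x) = - inner (s x) (P x)" by (simp add: sx)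
    also have "\<dots> = 0" by (simp add: symH_symmetric[OF s_in] s_P)
    finally have "P x = 0" by simp
    with sx have "x \<in> K" by (simp add: kernel_def)
    with \<open>P x = 0\<close> show "x = 0" by (simp add: P_self)
  qed
  then show ?thesis
    unfolding U_def mem_Collect_eq by (intro injI) (metis blinfun.diff_right right_minus_eq)
qed

lemma R_has_derivative:
  "t \<in> U \<Longrightarrow> (R has_derivative (\<lambda>h. - (R t o\<^sub>L (Q o\<^sub>L h o\<^sub>L Q) o\<^sub>L R t))) (at t)"
  unfolding R_def[abs_def] U_def
  by (rule has_derivative_compose[OF _ has_derivative_blinfun_inv, unfolded A_def[symmetric]])
    (auto simp: A_def intro!: derivative_eq_intros bounded_linear_imp_has_derivative bounded_linear_blinfun_sandwich)

lemma C_infinity_on_F: "C_infinity_on U F"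
proof (rule C_infinity_on_blinfun_rational[OF open_U])
  have "blinfun_rational_on U A"
    unfolding A_def[abs_def]
    by (intro blinfun_rational_on.add blinfun_rational_on.const blinfun_rational_on.linear
        bounded_linear_blinfun_sandwich)
  then have "blinfun_rational_on U R"
    unfolding R_def[abs_def] by (rule blinfun_rational_on.inverse) (simp add: U_def)
  then show "blinfun_rational_on U F"
    unfolding F_def[abs_def]
    by (intro blinfun_rational_on.diff blinfun_rational_on.compose \<open>blinfun_rational_on U R\<close>
        blinfun_rational_on.const blinfun_rational_on.linear bounded_linear_ident)
qed

definition DF :: "('v \<Rightarrow>\<^sub>L 'v) \<Rightarrow> ('v \<Rightarrow>\<^sub>L 'v) \<Rightarrow> 'v \<Rightarrow>\<^sub>L 'v" where
  "DF q h = (P o\<^sub>L h o\<^sub>L P) - (P o\<^sub>L h o\<^sub>L Q o\<^sub>L R q o\<^sub>L Q o\<^sub>L q o\<^sub>L P)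
     + (P o\<^sub>L q o\<^sub>L Q o\<^sub>L (R q o\<^sub>L (Q o\<^sub>L h o\<^sub>L Q) o\<^sub>L R q) o\<^sub>L Q o\<^sub>L q o\<^sub>L P)
     - (P o\<^sub>L q o\<^sub>L Q o\<^sub>L R q o\<^sub>L Q o\<^sub>L h o\<^sub>L P)"

lemma DF_apply: "DF q h x = P (h (P x)) - P (h (Q (R q (Q (q (P x)))))) +
    P (q (Q (R q (Q (h (Q (R q (Q (q (P x)))))))))) - P (q (Q (R q (Q (h (P x))))))"
  by (simp add: DF_def blinfun.diff_left blinfun.add_left)

lemma F_has_derivative:
  assumes q: "q \<in> U"
  shows "(F has_derivative DF q) (at q)"
  unfolding F_def[abs_def]
  using R_has_derivative[OF q]
  by (auto intro!: derivative_eq_intros ext blinfun_eqI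
      simp: DF_apply blinfun.diff_left blinfun.add_left blinfun.minus_left blinfun.diff_right
        blinfun.add_right blinfun.minus_right)

definition Y :: "('v \<Rightarrow>\<^sub>L 'v) set" where "Y = {y \<in> E. \<forall>x. P (y (P x)) = y x}"

lemma subspace_Y: "subspace Y"
  unfolding subspace_def Y_def symH_def
  by (auto simp: blinfun.add_left blinfun.scaleR_left inner_add_left inner_add_right
      blinfun.add_right blinfun.scaleR_right)

lemma compressed_apply:
  fixes y :: "'v \<Rightarrow>\<^sub>L 'v"
  assumes "\<forall>x. P (y (P x)) = y x"
  shows "y (Q z) = 0" "Q (y z) = 0" "P (y z) = y z" "y (P z) = y z"
proof -
  show "y (Q z) = 0" using assms[rule_format, of "Q z"] by (simp add: P_Q)
  show "Q (y z) = 0" using assms[rule_format, of z] Q_P by metis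
  show "P (y z) = y z" using assms[rule_format, of z] P_P by metis
  show "y (P z) = y z" using assms[rule_format, of "P z"] assms[rule_format, of z] P_P by metis
qed

lemma A_symmetric: "q \<in> E \<Longrightarrow> inner (A q x) y = inner x (A q y)"
  by (simp add: A_apply inner_add_left inner_add_right P_symmetric Q_symmetric symH_symmetric)

lemma A_equivariant: "q \<in> E \<Longrightarrow> h \<in> H \<Longrightarrow> A q (\<rho> h x) = \<rho> h (A q x)"
  by (simp add: A_apply blinfun.add_right P_equivariant Q_equivariant symH_equivariant)

lemma R_symmetric:
  assumes "q \<in> E" "q \<in> U"
  shows "inner (R q x) y = inner x (R q y)"
  using A_symmetric[OF assms(1), of "R q x" "R q y"] by (simp add: A_R assms(2))

lemma R_equivariant:
  assumes "q \<in> E" "q \<in> U" "h \<in> H"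
  shows "R q (\<rho> h x) = \<rho> h (R q x)"
  using A_equivariant[OF assms(1,3), of "R q x"] R_A[OF assms(2)] by (metis A_R[OF assms(2)])

lemma DF_Y:
  assumes "y \<in> Y"
  shows "DF q y = y"
proof -
  have "\<forall>x. P (y (P x)) = y x" using assms by (simp add: Y_def)
  note c = compressed_apply[OF this]
  show ?thesis by (rule blinfun_eqI) (simp only: DF_apply c blinfun.zero_right diff_zero add_0_right)
qed



lemma DF_s_apply: "DF s h x = P (h (P x))"
  by (simp only: DF_apply s_P P_s blinfun.zero_right diff_zero add_0_right)

lemma F_in_Y:
  assumes q: "q \<in> E" "q \<in> U"
  shows "F q \<in> Y"
  unfolding Y_def symH_def
proof (intro CollectI conjI allI ballI)
  fix x y
  show "inner (F q x) y = inner x (F q y)"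
    by (simp add: F_apply inner_diff_left inner_diff_right P_symmetric Q_symmetric
        symH_symmetric[OF q(1)] R_symmetric[OF q])
next
  fix h x assume h: "h \<in> H"
  show "F q (\<rho> h x) = \<rho> h (F q x)"
    by (simp add: F_apply P_equivariant[OF h] Q_equivariant[OF h] symH_equivariant[OF q(1) h]
        R_equivariant[OF q h] blinfun.diff_right)
qed (simp add: F_apply P_P blinfun.diff_right)

lemma DF_in_Y:
  assumes q: "q \<in> E" "q \<in> U" and v: "v \<in> E"
  shows "DF q v \<in> Y"
  unfolding Y_def symH_def
proof (intro CollectI conjI allI ballI)
  fix x y
  show "inner (DF q v x) y = inner x (DF q v y)"
    by (simp only: DF_apply inner_diff_left inner_add_left inner_diff_right inner_add_right P_symmetric
        Q_symmetric symH_symmetric[OF q(1)] symH_symmetric[OF v] R_symmetric[OF q])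
next
  fix h x assume h: "h \<in> H"
  show "DF q v (\<rho> h x) = \<rho> h (DF q v x)"
    by (simp only: DF_apply P_equivariant[OF h] Q_equivariant[OF h] symH_equivariant[OF q(1) h]
        symH_equivariant[OF v h] R_equivariant[OF q h] blinfun.diff_right blinfun.add_right)
qed (simp only: DF_apply P_P blinfun.diff_right blinfun.add_right)

lemma kernel_decompose:
  assumes t: "t \<in> U" and x: "t x = 0"
  shows "F t (P x) = 0" and "x = P x - R t (Q (t (P x)))"
proof -
  have tx: "t (Q x) = - t (P x)"
    using x P_plus_Q[of x] by (metis add.commute blinfun.add_right eq_neg_iff_add_eq_0)
  have "A t (Q x) = - Q (t (P x))" by (simp add: A_apply P_Q Q_Q tx blinfun.minus_right)
  then have Qx: "Q x = - R t (Q (t (P x)))" using R_A[OF t, of "Q x"] by (simp add: blinfun.minus_right)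
  then show "x = P x - R t (Q (t (P x)))" using P_plus_Q[of x] by simp
  have "Q (R t (Q (t (P x)))) = - Q x" using Qx by (simp add: blinfun.minus_right Q_Q Q_R[OF t])
  then have "F t (P x) = P (t (P x) + t (Q x))"
    by (simp add: F_apply P_P blinfun.minus_right blinfun.add_right)
  also have "\<dots> = 0" using x P_plus_Q[of x] by (simp flip: blinfun.add_right)
  finally show "F t (P x) = 0" .
qed

lemma kernel_lift:
  assumes t: "t \<in> U" and k: "k \<in> K" and Fk: "F t k = 0"
  shows "t (k - R t (Q (t k))) = 0" and "P (k - R t (Q (t k))) = k"
proof -
  have Pk: "P k = k" using k by (rule P_self)
  have Qy: "Q (R t (Q (t k))) = R t (Q (t k))" by (simp add: Q_R[OF t] Q_Q)
  have Py: "P (R t (Q (t k))) = 0" by (simp add: P_R[OF t] P_Q)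
  show "P (k - R t (Q (t k))) = k" using Py Pk by (simp add: blinfun.diff_right)
  have "Q (t (R t (Q (t k)))) = A t (R t (Q (t k)))" by (simp add: A_apply Qy Py)
  also have "\<dots> = Q (t k)" by (rule A_R[OF t])
  finally have "Q (t (k - R t (Q (t k)))) = 0" by (simp add: blinfun.diff_right)
  moreover have "P (t (k - R t (Q (t k)))) = F t k"
    by (simp add: F_apply Pk Qy blinfun.diff_right)
  ultimately show "t (k - R t (Q (t k))) = 0" using Fk P_plus_Q[of "t (k - R t (Q (t k)))"] by simp
qed

lemma F_P: "F t (P x) = F t x" by (simp add: F_apply P_P)

lemma subspace_F_kernel: "subspace {k \<in> K. F t k = 0}"
  using subspace_kernel[of s] unfolding subspace_def by (auto simp: blinfun.add_right blinfun.scaleR_right)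

lemma bij_betw_P_kernel:
  assumes t: "t \<in> U"
  shows "bij_betw P (kernel t) {k \<in> K. F t k = 0}"
  unfolding bij_betw_def
proof
  show "inj_on P (kernel t)"
    by (rule inj_onI) (metis kernel_decompose(2)[OF t] kernel_def mem_Collect_eq)
  show "P ` kernel t = {k \<in> K. F t k = 0}"
  proof (intro subset_antisym subsetI)
    fix k assume "k \<in> P ` kernel t"
    then obtain x where "t x = 0" "k = P x" by (auto simp: kernel_def)
    then show "k \<in> {k \<in> K. F t k = 0}" using kernel_decompose(1)[OF t] P_in by simp
  next
    fix k assume "k \<in> {k \<in> K. F t k = 0}"
    then have "k \<in> K" "F t k = 0" by auto
    from kernel_lift[OF t this] show "k \<in> P ` kernel t"
      by (intro image_eqI[of k P "k - R t (Q (t k))"]) (simp_all add: kernel_def)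
  qed
qed

lemma F_eq_0_iff_dim_kernel:
  assumes t: "t \<in> U"
  shows "F t = 0 \<longleftrightarrow> dim (kernel t) = dim K"
proof
  assume "F t = 0"
  then have "bij_betw P (kernel t) K" using bij_betw_P_kernel[OF t] by simp
  then show "dim (kernel t) = dim K"
    by (rule bij_betw_linear_dim_eq[OF bounded_linear.linear[OF blinfun.bounded_linear_right] _ subspace_kernel,
          symmetric])
next
  assume dim: "dim (kernel t) = dim K"
  have "dim {k \<in> K. F t k = 0} = dim (kernel t)"
    by (rule bij_betw_linear_dim_eq[OF bounded_linear.linear[OF blinfun.bounded_linear_right]
          bij_betw_P_kernel[OF t] subspace_kernel])
  with dim have "{k \<in> K. F t k = 0} = K"
    by (intro subspace_dim_equal[OF subspace_F_kernel subspace_kernel]) auto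
  then have "F t (P x) = 0" for x using P_in[of x] by blast
  then show "F t = 0" by (intro blinfun_eqI) (simp add: F_P)
qed

lemma
  fixes y :: "'v \<Rightarrow>\<^sub>L 'v"
  assumes y: "\<forall>x. P (y (P x)) = y x"
  shows U_shift: "q - y \<in> U \<longleftrightarrow> q \<in> U" and F_shift: "q \<in> U \<Longrightarrow> F (q - y) = F q - y"
proof -
  have A: "A (q - y) = A q"
    by (rule blinfun_eqI) (simp add: A_apply blinfun.diff_left blinfun.diff_right compressed_apply[OF y])
  then show "q - y \<in> U \<longleftrightarrow> q \<in> U" by (simp add: U_def)
  have "R (q - y) = R q" by (simp add: R_def A)
  then show "F (q - y) = F q - y" if "q \<in> U"
    by (intro blinfun_eqI) (simp add: F_apply blinfun.diff_left blinfun.diff_right compressed_apply[OF y])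
qed

lemma tangent_space_zero_set_subset:
  assumes v: "v \<in> tangent_space M s" and M: "M \<inter> U \<subseteq> {q \<in> E. F q = 0}"
  shows "v \<in> E" and "P (v (P x)) = 0"
proof -
  have "DF s v = 0"
    using tangent_space_derivative_eq_0[OF v open_U s_in_U F_has_derivative[OF s_in_U]] M by blast
  then show "P (v (P x)) = 0" using DF_s_apply[of v x] by simp
  have ap: "bounded_linear (\<lambda>t::'v \<Rightarrow>\<^sub>L 'v. t x)" for x
    by (rule bounded_bilinear.bounded_linear_left[OF bounded_bilinear_blinfun_apply])
  have "inner (v x) y - inner x (v y) = 0" for x y
  proof (rule tangent_space_derivative_eq_0[OF v open_U s_in_U bounded_linear_imp_has_derivative])
    show "bounded_linear (\<lambda>t::'v \<Rightarrow>\<^sub>L 'v. inner (t x) y - inner x (t y))"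
      by (intro bounded_linear_sub bounded_linear_compose[OF bounded_linear_inner_left ap]
          bounded_linear_compose[OF bounded_linear_inner_right ap])
  qed (use M in \<open>auto simp: symH_symmetric\<close>)
  moreover have "v (\<rho> h x) - \<rho> h (v x) = 0" if "h \<in> H" for h x
  proof (rule tangent_space_derivative_eq_0[OF v open_U s_in_U bounded_linear_imp_has_derivative])
    show "bounded_linear (\<lambda>t::'v \<Rightarrow>\<^sub>L 'v. t (\<rho> h x) - \<rho> h (t x))"
      by (intro bounded_linear_sub ap bounded_linear_compose[OF blinfun.bounded_linear_right ap])
  qed (use M that in \<open>auto simp: symH_equivariant\<close>)
  ultimately show "v \<in> E" by (simp add: symH_def)
qed

lemma zero_set_retraction:
  assumes q: "q \<in> E" "q \<in> U"
  shows "q - F q \<in> E" and "q - F q \<in> U" and "F (q - F q) = 0"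
proof -
  have "F q \<in> Y" by (rule F_in_Y[OF q])
  then have Fq: "\<forall>x. P (F q (P x)) = F q x" "F q \<in> E" by (auto simp: Y_def)
  show "q - F q \<in> E" by (rule subspace_diff[OF subspace_E q(1) Fq(2)])
  show "q - F q \<in> U" using U_shift[OF Fq(1)] q(2) by simp
  show "F (q - F q) = 0" using F_shift[OF Fq(1) q(2)] by simp
qed

lemma tangent_space_zero_set:
  assumes sM: "s \<in> M" and M: "M \<inter> U = {q \<in> E \<inter> U. F q = 0}"
  shows "tangent_space M s = {v \<in> E. \<forall>x. P (v (P x)) = 0}"
proof (intro subset_antisym subsetI)
  fix v assume "v \<in> tangent_space M s"
  with M tangent_space_zero_set_subset show "v \<in> {v \<in> E. \<forall>x. P (v (P x)) = 0}" by blast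
next
  fix v assume "v \<in> {v \<in> E. \<forall>x. P (v (P x)) = 0}"
  then have v: "v \<in> E" "\<And>x. P (v (P x)) = 0" by auto
  obtain e where e: "e > 0" "\<And>t. t \<in> {-e<..<e} \<Longrightarrow> s + t *\<^sub>R v \<in> U"
    using open_line_neighbourhood[OF open_U s_in_U] by blast
  define \<gamma> where "\<gamma> t = (s + t *\<^sub>R v) - F (s + t *\<^sub>R v)" for t
  have "\<gamma> t \<in> M" if "t \<in> {-e<..<e}" for t
  proof -
    have "s + t *\<^sub>R v \<in> E" by (intro subspace_add subspace_scale subspace_E s_in v(1))
    with e(2)[OF that] have "\<gamma> t \<in> M \<inter> U" unfolding M \<gamma>_def by (simp add: zero_set_retraction)
    then show ?thesis by simp
  qed
  moreover have "\<gamma> 0 = s" using sM s_in_U M by (auto simp: \<gamma>_def)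
  moreover have "(\<gamma> has_vector_derivative v) (at 0)"
  proof -
    have line: "((\<lambda>t. s + t *\<^sub>R v) has_derivative (\<lambda>t. t *\<^sub>R v)) (at 0)"
      by (auto intro!: derivative_eq_intros)
    have "(\<gamma> has_derivative (\<lambda>t. t *\<^sub>R v - DF s (t *\<^sub>R v))) (at 0)"
      unfolding \<gamma>_def[abs_def]
      using has_derivative_diff[OF line has_derivative_compose[OF line F_has_derivative]] s_in_U by simp
    moreover have "DF s (t *\<^sub>R v) = 0" for t
      by (rule blinfun_eqI) (simp add: DF_s_apply blinfun.scaleR_left blinfun.scaleR_right v(2))
    ultimately show ?thesis by (simp add: has_vector_derivative_def)
  qed
  ultimately show "v \<in> tangent_space M s" unfolding tangent_space_def using e(1) by blast
qed

lemma compression_in_symH_sub: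
  assumes e: "e \<in> E"
  shows "(\<lambda>x. P (e x)) \<in> symH_sub H \<rho> K"
  unfolding symH_sub_def
proof (intro CollectI conjI ballI allI)
  fix x y assume x: "x \<in> K" and y: "y \<in> K"
  have "inner (P (e x)) y = inner x (e y)" by (simp add: P_inner[OF y] symH_symmetric[OF e])
  also have "\<dots> = inner x (P (e y))" using P_inner[OF x, of "e y"] by (simp add: inner_commute)
  finally show "inner (P (e x)) y = inner x (P (e y))" .
qed (simp_all add: P_in blinfun.add_right blinfun.scaleR_right symH_equivariant[OF e] P_equivariant)

lemma symH_sub_extension:
  assumes f: "f \<in> symH_sub H \<rho> K"
  obtains e where "e \<in> E" "\<And>x. x \<in> K \<Longrightarrow> P (e x) = f x"
proof
  have fK: "\<And>x. x \<in> K \<Longrightarrow> f x \<in> K"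
    and f_sym: "\<And>x y. x \<in> K \<Longrightarrow> y \<in> K \<Longrightarrow> inner (f x) y = inner x (f y)"
    and f_eq: "\<And>h x. h \<in> H \<Longrightarrow> x \<in> K \<Longrightarrow> f (\<rho> h x) = \<rho> h (f x)"
    using f by (auto simp: symH_sub_def)
  have "linear (\<lambda>x. f (P x))"
    using f by (intro linearI) (simp_all add: symH_sub_def blinfun.add_right blinfun.scaleR_right P_in)
  then have e: "Blinfun (\<lambda>x. f (P x)) x = f (P x)" for x by (simp add: blinfun_apply_Blinfun_linear)
  show "\<And>x. x \<in> K \<Longrightarrow> P (Blinfun (\<lambda>x. f (P x)) x) = f x" by (simp add: e P_self fK)
  show "Blinfun (\<lambda>x. f (P x)) \<in> E"
    unfolding symH_def
  proof (intro CollectI conjI allI ballI)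
    fix x y
    have "inner (f (P x)) y = inner (f (P x)) (P y)" by (simp add: P_inner[OF fK[OF P_in]] inner_commute)
    also have "\<dots> = inner (P x) (f (P y))" by (rule f_sym[OF P_in P_in])
    also have "\<dots> = inner x (f (P y))" by (simp add: P_inner[OF fK[OF P_in]] inner_commute)
    finally show "inner (Blinfun (\<lambda>x. f (P x)) x) y = inner x (Blinfun (\<lambda>x. f (P x)) y)" by (simp add: e)
  qed (simp add: e P_equivariant f_eq P_in)
qed

lemma transverse_iff_compression_surj:
  assumes L: "subspace L" "L \<subseteq> E"
  shows "{a + b |a b. a \<in> {v \<in> E. \<forall>x. P (v (P x)) = 0} \<and> b \<in> L} = E \<longleftrightarrow>
    (\<forall>f\<in>symH_sub H \<rho> K. \<exists>l\<in>L. \<forall>x\<in>K. orth_proj K (l x) = f x)"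
proof
  assume sum: "{a + b |a b. a \<in> {v \<in> E. \<forall>x. P (v (P x)) = 0} \<and> b \<in> L} = E"
  show "\<forall>f\<in>symH_sub H \<rho> K. \<exists>l\<in>L. \<forall>x\<in>K. orth_proj K (l x) = f x"
  proof
    fix f assume "f \<in> symH_sub H \<rho> K"
    then obtain e where e: "e \<in> E" "\<And>x. x \<in> K \<Longrightarrow> P (e x) = f x"
      by (rule symH_sub_extension) (rule that)
    then obtain a l where al: "e = a + l" "a \<in> E" "\<And>x. P (a (P x)) = 0" "l \<in> L"
      using sum by blast
    have "orth_proj K (l x) = f x" if "x \<in> K" for x
      using e(2)[OF that] al(3)[of x] P_self[OF that]
      by (simp add: al(1) blinfun.add_left blinfun.add_right P_apply)
    with al(4) show "\<exists>l\<in>L. \<forall>x\<in>K. orth_proj K (l x) = f x" by blast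
  qed
next
  assume surj: "\<forall>f\<in>symH_sub H \<rho> K. \<exists>l\<in>L. \<forall>x\<in>K. orth_proj K (l x) = f x"
  show "{a + b |a b. a \<in> {v \<in> E. \<forall>x. P (v (P x)) = 0} \<and> b \<in> L} = E"
  proof (intro subset_antisym subsetI)
    fix e assume "e \<in> {a + b |a b. a \<in> {v \<in> E. \<forall>x. P (v (P x)) = 0} \<and> b \<in> L}"
    then show "e \<in> E" using L subspace_add[OF subspace_E] by blast
  next
    fix e assume e: "e \<in> E"
    obtain l where l: "l \<in> L" "\<And>x. x \<in> K \<Longrightarrow> orth_proj K (l x) = P (e x)"
      using bspec[OF surj compression_in_symH_sub[OF e]] by auto
    have "e - l \<in> E" using subspace_diff[OF subspace_E e] l(1) L(2) by blast
    moreover have "P ((e - l) (P x)) = 0" for x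
      using l(2)[OF P_in, of x] by (simp add: P_apply blinfun.diff_left blinfun.diff_right)
    ultimately show "e \<in> {a + b |a b. a \<in> {v \<in> E. \<forall>x. P (v (P x)) = 0} \<and> b \<in> L}"
      using l(1) by (intro CollectI exI[of _ "e - l"] exI[of _ l]) simp
  qed
qed

lemma Y_eq_sym_rep: "Y = sym_rep H (\<lambda>h. blinfun_apply (\<rho> h)) K inner"
proof (intro subset_antisym subsetI)
  fix y assume "y \<in> Y"
  then have y: "y \<in> E" "\<forall>x. P (y (P x)) = y x" by (auto simp: Y_def)
  show "y \<in> sym_rep H (\<lambda>h. blinfun_apply (\<rho> h)) K inner"
    unfolding sym_rep_def
  proof (intro CollectI conjI ballI allI impI)
    fix x show "x \<in> K \<Longrightarrow> y x \<in> K" using P_in compressed_apply(3)[OF y(2)] by metis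
    assume "\<forall>w\<in>K. inner x w = 0"
    then have "P x = 0" by (simp add: P_apply orth_proj_eq_0 subspace_kernel)
    then show "y x = 0" using compressed_apply(4)[OF y(2), of x] by simp
  qed (simp_all add: symH_symmetric[OF y(1)] symH_equivariant[OF y(1)])
next
  fix f assume f: "f \<in> sym_rep H (\<lambda>h. blinfun_apply (\<rho> h)) K inner"
  have fK: "f x \<in> K" for x by (rule sym_rep_in[OF f subspace_kernel])
  have fP: "f (P x) = f x" for x unfolding P_apply by (rule sym_rep_orth_proj[OF f subspace_kernel])
  have "f \<in> E"
    unfolding symH_def
  proof (intro CollectI conjI allI ballI)
    fix x y
    have "inner (f x) y = inner (f (P x)) (P y)" using P_inner[OF fK, of y x] by (simp add: fP inner_commute)
    also have "\<dots> = inner (P x) (f (P y))" using f P_in by (simp add: sym_rep_def)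
    also have "\<dots> = inner x (f y)" using P_inner[OF fK, of x y] by (simp add: fP inner_commute)
    finally show "inner (f x) y = inner x (f y)" .
  next
    fix h x assume h: "h \<in> H"
    have "f (\<rho> h x) = f (\<rho> h (P x))" by (metis fP P_equivariant[OF h])
    also have "\<dots> = \<rho> h (f x)" using f h P_in fP by (simp add: sym_rep_def)
    finally show "f (\<rho> h x) = \<rho> h (f x)" .
  qed
  then show "f \<in> Y" by (simp add: Y_def fP P_self fK)
qed

lemma symH_sigma_inter_U:
  assumes s: "s \<in> symH_sigma G H \<rho> \<rho>W W"
  shows "symH_sigma G H \<rho> \<rho>W W \<inter> U = {q \<in> E \<inter> U. F q = 0}"
proof (intro subset_antisym subsetI)
  have iso_s: "rep_iso_G G H (\<lambda>h. blinfun_apply (\<rho> h)) K \<rho>W W" using s by (simp add: symH_sigma_def)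
  fix q
  assume "q \<in> symH_sigma G H \<rho> \<rho>W W \<inter> U"
  then have q: "q \<in> E" "q \<in> U" "rep_iso_G G H (\<lambda>h. blinfun_apply (\<rho> h)) (kernel q) \<rho>W W"
    by (auto simp: symH_sigma_def)
  have "dim (kernel q) = dim K"
    using rep_iso_G_dim_eq[OF q(3) subspace_kernel] rep_iso_G_dim_eq[OF iso_s subspace_kernel] by simp
  with q show "q \<in> {q \<in> E \<inter> U. F q = 0}" by (simp add: F_eq_0_iff_dim_kernel)
next
  have iso_s: "rep_iso_G G H (\<lambda>h. blinfun_apply (\<rho> h)) K \<rho>W W" using s by (simp add: symH_sigma_def)
  fix q assume "q \<in> {q \<in> E \<inter> U. F q = 0}"
  then have q: "q \<in> E" "q \<in> U" "F q = 0" by auto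
  then have "bij_betw P (kernel q) K" using bij_betw_P_kernel[OF q(2)] by simp
  then have "rep_iso_G G H (\<lambda>h. blinfun_apply (\<rho> h)) (kernel q) \<rho>W W"
    by (rule rep_iso_G_transfer[OF iso_s bounded_linear.linear[OF blinfun.bounded_linear_right]])
      (simp add: P_equivariant)
  with q show "q \<in> symH_sigma G H \<rho> \<rho>W W \<inter> U" by (simp add: symH_sigma_def)
qed

lemma dim_Y_eq_d_sigma:
  assumes s: "s \<in> symH_sigma G H \<rho> \<rho>W W" and rep_W: "is_rep H W \<rho>W"
  shows "dim Y = d_sigma H \<rho>W W"
proof -
  obtain g \<phi> where g: "H = (\<lambda>k. g ** k ** matrix_inv g) ` H" and \<phi>: "linear \<phi>" "bij_betw \<phi> K W"
    and \<phi>_equivariant: "\<And>k x. k \<in> H \<Longrightarrow> x \<in> K \<Longrightarrow> \<rho>W (g ** k ** matrix_inv g) (\<phi> x) = \<phi> (\<rho> k x)"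
    using s by (auto simp: symH_sigma_def rep_iso_G_def)
  interpret conj_rep_iso H "\<lambda>k. g ** k ** matrix_inv g" "\<lambda>h. blinfun_apply (\<rho> h)" K \<rho>W W \<phi>
    using rep_W g \<phi>_equivariant
    by (intro conj_rep_iso.intro kernel_rep \<phi>) (auto simp: is_rep_def)
  define b where "b = (SOME b. inv_inner H \<rho>W W b)"
  have b: "inv_inner H \<rho>W W b"
    unfolding b_def
    by (rule someI[where P = "inv_inner H \<rho>W W",
          OF inv_inner_pushforward[OF orth_rep_inv_inner[OF orth_rep]]])
  have "dim Y = dim (sym_rep H (\<lambda>h. blinfun_apply (\<rho> h)) K inner)" by (simp add: Y_eq_sym_rep)
  also have "\<dots> = dim (sym_rep H (\<lambda>h. blinfun_apply (\<rho> h)) K (\<lambda>x y. b (\<phi> x) (\<phi> y)))"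
    by (rule two_invariant_inners.dim_sym_rep_change_inner[symmetric], unfold_locales)
      (fact matrix_group kernel_rep orth_rep_inv_inner[OF orth_rep] inv_inner_pullback[OF b])+
  also have "\<dots> = dim (sym_rep H \<rho>W W b)" by (rule dim_sym_rep_pullback)
  finally show ?thesis by (simp add: d_sigma_def b_def)
qed

lemma frechet_derivative_F_image:
  assumes "q \<in> E" "q \<in> U"
  shows "frechet_derivative F (at q) ` E = Y"
proof -
  have "frechet_derivative F (at q) = DF q"
    using F_has_derivative[OF assms(2)] by (rule frechet_derivative_at[symmetric])
  moreover have "y \<in> DF q ` E" if "y \<in> Y" for y
    using DF_Y[OF that, of q] that by (metis (no_types, lifting) Y_def image_eqI mem_Collect_eq)
  ultimately show ?thesis using DF_in_Y[OF assms] by auto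
qed

lemma symH_sigma_chart:
  assumes s: "s \<in> symH_sigma G H \<rho> \<rho>W W" and rep_W: "is_rep H W \<rho>W"
  shows "\<exists>U F (Y::('v \<Rightarrow>\<^sub>L 'v) set). open U \<and> s \<in> U \<and> subspace Y \<and> dim Y = d_sigma H \<rho>W W \<and>
    C_infinity_on U F \<and> (\<forall>q\<in>E \<inter> U. F q \<in> Y \<and> frechet_derivative F (at q) ` E = Y) \<and>
    symH_sigma G H \<rho> \<rho>W W \<inter> U = {q \<in> E \<inter> U. F q = 0}"
  using open_U s_in_U subspace_Y dim_Y_eq_d_sigma[OF s rep_W] C_infinity_on_F F_in_Y
    frechet_derivative_F_image symH_sigma_inter_U[OF s]
  by blast

lemma transverse_at_symH_sigma_iff:
  assumes s: "s \<in> symH_sigma G H \<rho> \<rho>W W" and L: "subspace L" "L \<subseteq> E"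
  shows "transverse_at E L (symH_sigma G H \<rho> \<rho>W W) s \<longleftrightarrow>
    (\<forall>f\<in>symH_sub H \<rho> K. \<exists>l\<in>L. \<forall>x\<in>K. orth_proj K (l x) = f x)"
  unfolding transverse_at_def tangent_space_zero_set[OF s symH_sigma_inter_U[OF s]]
  using s transverse_iff_compression_surj[OF L] by simp

end

theorem lemma3p13:
  fixes G H :: "(real^'n^'n) set"
    and \<rho> :: "real^'n^'n \<Rightarrow> ('v::euclidean_space \<Rightarrow>\<^sub>L 'v)"
    and W :: "'w::euclidean_space set"
    and \<rho>W :: "real^'n^'n \<Rightarrow> 'w \<Rightarrow> 'w"
  assumes "compact_lie_group G"
    and "closed_subgroup H G"
    and "orth_rep H \<rho>"
    and "is_rep H W \<rho>W"
  shows "submanifold_codim (symH H \<rho>) (symH_sigma G H \<rho> \<rho>W W) (d_sigma H \<rho>W W) \<and>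
    (\<forall>s L. s \<in> symH_sigma G H \<rho> \<rho>W W \<longrightarrow> subspace L \<longrightarrow> L \<subseteq> symH H \<rho> \<longrightarrow>
      (transverse_at (symH H \<rho>) L (symH_sigma G H \<rho> \<rho>W W) s \<longleftrightarrow>
       (\<forall>f\<in>symH_sub H \<rho> (kernel s).
          \<exists>l\<in>L. \<forall>x\<in>kernel s. orth_proj (kernel s) (blinfun_apply l x) = f x)))"
proof -
  have chart: "schur_chart H \<rho> s" if "s \<in> symH_sigma G H \<rho> \<rho>W W" for s
    using that assms(2,3) by (simp add: schur_chart_def closed_subgroup_def symH_sigma_def)
  have "submanifold_codim (symH H \<rho>) (symH_sigma G H \<rho> \<rho>W W) (d_sigma H \<rho>W W)"
    unfolding submanifold_codim_def
    using subspace_symH schur_chart.symH_sigma_chart[OF chart _ assms(4)] by (auto simp: symH_sigma_def)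
  moreover have "transverse_at (symH H \<rho>) L (symH_sigma G H \<rho> \<rho>W W) s \<longleftrightarrow>
      (\<forall>f\<in>symH_sub H \<rho> (kernel s). \<exists>l\<in>L. \<forall>x\<in>kernel s. orth_proj (kernel s) (l x) = f x)"
    if "s \<in> symH_sigma G H \<rho> \<rho>W W" "subspace L" "L \<subseteq> symH H \<rho>" for s L
    by (rule schur_chart.transverse_at_symH_sigma_iff[OF chart[OF that(1)] that])
  ultimately show ?thesis by blast
qed

end
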